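(* (Discrete Korn inequality for space groups.) Suppose that $\mathcal G$ is a space group and $\mathcal R\subset\mathcal G$ has Property 2. Then the seminorms $\|\cdot\|_{\mathcal R}$, $\|\cdot\|_{\mathcal R,0,0}$ and $u\mapsto\|\nabla_{\mathcal R}u\|_2$ on $U_{\mathrm{per}}$ are equivalent.
   Context: Euclidean group: $\mathrm E(n)$ consists of pairs $(A|b)$, $A\in\mathrm O(n)$, $b\in\mathbb R^n$, acting by $(A|b)\cdot x=Ax+b$, product $(A_1|b_1)(A_2|b_2)=(A_1A_2|b_1+A_1b_2)$; $\mathrm{rot}(A|b)=A$. A space group in $\mathrm E(n)$ is a discrete subgroup containing $n$ translations $(I|b)$ with linearly independent $b$'s. Standing setting: $d=d_1+d_2$; $\mathcal S<\mathrm E(d_2)$ is a space group with translation subgroup $\mathcal T_{\mathcal S}$; $A\oplus(B|b)=(\mathrm{diag}(A,B)|(0,b))$; $\mathcal G$ is a discrete subgroup of $\mathrm E(d)$ contained in $\{A\oplus s:A\in\mathrm O(d_1),s\in\mathcal S\}$ projecting onto $\mathcal S$; $\mathcal T\subset\mathcal G$ maps bijectively onto $\mathcal T_{\mathcal S}$. There is $m_0\in\mathbb N$ such that $\mathcal T^N=\{t^N:t\in\mathcal T\}$ is a normal subgroup iff $N\in\mathcal M=m_0\mathbb N$, then isomorphic to $\mathbb Z^{d_2}$ of finite index; $\mathcal C_N$ is a fixed set of representatives of $\mathcal G/\mathcal T^N$. $U_{\mathrm{per}}$: maps $u:\mathcal G\to\mathbb R^d$ that are $\mathcal T^N$-periodic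 for some $N\in\mathcal M$. $x_0\in\mathbb R^d$ with $g\mapsto g\cdot x_0$ injective; $d_{\mathrm{aff}}=\dim\mathrm{aff}(\mathcal G\cdot x_0)$; assumed $\mathcal G\cdot x_0\subset\{0_{d-d_{\mathrm{aff}}}\}\times\mathbb R^{d_{\mathrm{aff}}}$ and $\mathcal G$ acts trivially on $\mathbb R^{d-d_{\mathrm{aff}}}\times\{0\}$. For $\mathcal R\subset\mathcal G$, maps $v:\mathcal R\to\mathbb R^d$: $U_{\mathrm{iso}}(\mathcal R)$: $\exists a\in\mathbb R^d$, $S\in\mathrm{Skew}(d)$ with $\mathrm{rot}(g)v(g)=a+S(g\cdot x_0-x_0)$ on $\mathcal R$; $U_{\mathrm{iso},0,0}(\mathcal R)$: the same with $S=S_1\oplus0_{d_2\times d_2}$, $S_1\in\mathrm{Skew}(d_1)$. For finite $\mathcal R$ and $\mathcal T^N$-periodic $u$: $\|u\|_{\mathcal R}$ (resp. $\|u\|_{\mathcal R,0,0}$) $=\big(\frac1{|\mathcal C_N|}\sum_{g\in\mathcal C_N}\mathrm{dist}(u(g\,\cdot)|_{\mathcal R},U)^2\big)^{1/2}$ with $U=U_{\mathrm{iso}}(\mathcal R)$ (resp. $U_{\mathrm{iso},0,0}(\mathcal R)$); $\|\nabla_{\mathcal R}u\|_2=\big(\frac1{|\mathcal C_N|}\sum_{g\in\mathcal C_N}\sum_{h\in\mathcal R}|u(gh)-\mathrm{rot}(h)^Tu(g)|^2\big)^{1/2}$. Property 1: $\mathcal R$ finite, $\mathrm{id}\in\mathcal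 R$, $\mathrm{aff}(\mathcal R\cdot x_0)=\mathrm{aff}(\mathcal G\cdot x_0)$. Property 2: $\mathcal R$ finite, and there are $\mathcal R',\mathcal R''$ with $\mathrm{id}\in\mathcal R'$, $\mathcal R'$ generating $\mathcal G$, $\mathcal R''$ with Property 1, and $\{gh:g\in\mathcal R',h\in\mathcal R''\}\subset\mathcal R$. *)

theory Defs
  imports "HOL-Analysis.Analysis"
begin

text \<open>Elements (A|b) of the Euclidean group E(n), n = CARD('n), are pairs (A, b).\<close>
type_synonym 'n euc = "(real^'n^'n) \<times> (real^'n)"

definition eid :: "'n::finite euc" where
  "eid = (mat 1, 0)"

definition emul :: "'n::finite euc \<Rightarrow> 'n euc \<Rightarrow> 'n euc" where
  "emul g h = (fst g ** fst h, snd g + fst g *v snd h)"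

definition einv :: "'n::finite euc \<Rightarrow> 'n euc" where
  "einv g = (transpose (fst g), - (transpose (fst g) *v snd g))"

definition eact :: "'n::finite euc \<Rightarrow> real^'n \<Rightarrow> real^'n" where
  "eact g x = fst g *v x + snd g"

definition rot :: "'n::finite euc \<Rightarrow> real^'n^'n" where
  "rot g = fst g"

fun epow :: "'n::finite euc \<Rightarrow> nat \<Rightarrow> 'n euc" where
  "epow g 0 = eid"
| "epow g (Suc k) = emul g (epow g k)"

definition euc_subgroup :: "'n::finite euc set \<Rightarrow> bool" where
  "euc_subgroup G \<longleftrightarrow> (\<forall>g\<in>G. orthogonal_matrix (fst g)) \<and> eid \<in> G \<and>
     (\<forall>g\<in>G. \<forall>h\<in>G. emul g h \<in> G) \<and> (\<forall>g\<in>G. einv g \<in> G)"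

definition space_group :: "'n::finite euc set \<Rightarrow> bool" where
  "space_group G \<longleftrightarrow> euc_subgroup G \<and> discrete G \<and>
     (\<exists>B. B \<subseteq> {b. (mat 1, b) \<in> G} \<and> independent B \<and> card B = CARD('n))"

definition transl :: "'n::finite euc set \<Rightarrow> 'n euc set" where
  "transl G = {g \<in> G. fst g = mat 1}"

definition TN :: "'n::finite euc set \<Rightarrow> nat \<Rightarrow> 'n euc set" where
  "TN G N = {epow t N | t. t \<in> transl G}"

definition normal_subgroup :: "'n::finite euc set \<Rightarrow> 'n euc set \<Rightarrow> bool" where
  "normal_subgroup H G \<longleftrightarrow> H \<subseteq> G \<and> euc_subgroup H \<and>
     (\<forall>g\<in>G. \<forall>h\<in>H. emul (emul g h) (einv g) \<in> H)"

definition Mset :: "'n::finite euc set \<Rightarrow> nat set" where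
  "Mset G = {N. N \<ge> 1 \<and> normal_subgroup (TN G N) G}"

definition coset_reps :: "'n::finite euc set \<Rightarrow> nat \<Rightarrow> 'n euc set \<Rightarrow> bool" where
  "coset_reps G N C \<longleftrightarrow> C \<subseteq> G \<and> (\<forall>g\<in>G. \<exists>!c. c \<in> C \<and> emul (einv c) g \<in> TN G N)"

definition periodic :: "'n::finite euc set \<Rightarrow> nat \<Rightarrow> ('n euc \<Rightarrow> real^'n) \<Rightarrow> bool" where
  "periodic G N u \<longleftrightarrow> (\<forall>g\<in>G. \<forall>t\<in>TN G N. u (emul g t) = u g)"

definition skew :: "real^'n^'n \<Rightarrow> bool" where
  "skew S \<longleftrightarrow> transpose S = - S"

text \<open>U_iso(R) (maps compared only on R).\<close>
definition Uiso :: "real^'n::finite \<Rightarrow> 'n euc set \<Rightarrow> ('n euc \<Rightarrow> real^'n) set" where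
  "Uiso x0 R = {v. \<exists>a S. skew S \<and> (\<forall>g\<in>R. rot g *v v g = a + S *v (eact g x0 - x0))}"

text \<open>U_iso,0,0(R) for d1 = 0: S = S1 \<oplus> 0 with S1 in Skew(0), i.e. S = 0.\<close>
definition Uiso00 :: "real^'n::finite \<Rightarrow> 'n euc set \<Rightarrow> ('n euc \<Rightarrow> real^'n) set" where
  "Uiso00 x0 R = {v. \<exists>a. \<forall>g\<in>R. rot g *v v g = a}"

definition distR :: "'n::finite euc set \<Rightarrow> ('n euc \<Rightarrow> real^'n) \<Rightarrow> ('n euc \<Rightarrow> real^'n) set \<Rightarrow> real" where
  "distR R v U = Inf {sqrt (\<Sum>h\<in>R. (norm (v h - w h))\<^sup>2) | w. w \<in> U}"

definition normR :: "real^'n::finite \<Rightarrow> 'n euc set \<Rightarrow> 'n euc set \<Rightarrow> ('n euc \<Rightarrow> real^'n) \<Rightarrow> real" where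
  "normR x0 R C u = sqrt ((1 / real (card C)) * (\<Sum>g\<in>C. (distR R (\<lambda>h. u (emul g h)) (Uiso x0 R))\<^sup>2))"

definition normR00 :: "real^'n::finite \<Rightarrow> 'n euc set \<Rightarrow> 'n euc set \<Rightarrow> ('n euc \<Rightarrow> real^'n) \<Rightarrow> real" where
  "normR00 x0 R C u = sqrt ((1 / real (card C)) * (\<Sum>g\<in>C. (distR R (\<lambda>h. u (emul g h)) (Uiso00 x0 R))\<^sup>2))"

definition gradR :: "'n::finite euc set \<Rightarrow> 'n euc set \<Rightarrow> ('n euc \<Rightarrow> real^'n) \<Rightarrow> real" where
  "gradR R C u = sqrt ((1 / real (card C)) *
      (\<Sum>g\<in>C. \<Sum>h\<in>R. (norm (u (emul g h) - transpose (rot h) *v u g))\<^sup>2))"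

inductive_set generated :: "'n::finite euc set \<Rightarrow> 'n euc set" for R where
  gen_id: "eid \<in> generated R"
| gen_base: "r \<in> R \<Longrightarrow> r \<in> generated R"
| gen_mul: "x \<in> generated R \<Longrightarrow> y \<in> generated R \<Longrightarrow> emul x y \<in> generated R"
| gen_inv: "x \<in> generated R \<Longrightarrow> einv x \<in> generated R"

definition property1 :: "'n::finite euc set \<Rightarrow> real^'n \<Rightarrow> 'n euc set \<Rightarrow> bool" where
  "property1 G x0 R \<longleftrightarrow> R \<subseteq> G \<and> finite R \<and> eid \<in> R \<and>
     affine hull ((\<lambda>g. eact g x0) ` R) = affine hull ((\<lambda>g. eact g x0) ` G)"

definition property2 :: "'n::finite euc set \<Rightarrow> real^'n \<Rightarrow> 'n euc set \<Rightarrow> bool" where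
  "property2 G x0 R \<longleftrightarrow> R \<subseteq> G \<and> finite R \<and>
     (\<exists>R' R''. R' \<subseteq> G \<and> eid \<in> R' \<and> generated R' = G \<and> property1 G x0 R'' \<and>
        {emul g h | g h. g \<in> R' \<and> h \<in> R''} \<subseteq> R)"

end

theory Submission
  imports Defs
begin

text \<open>Two of the comparisons are elementary: \<open>Uiso00 x0 R \<subseteq> Uiso x0 R\<close> gives
  \<open>normR \<le> normR00\<close>; the candidate \<open>h \<mapsto> transpose (rot h) *v u g\<close> gives \<open>normR00 \<le> gradR\<close>;
  and comparing with the best constant gives \<open>gradR \<le> c * normR00\<close>. The substance is the discrete
  Korn inequality \<open>gradR \<le> K * normR\<close>.

  Pass to the global frame \<open>W g = rot g *v u g\<close> and fit on every stencil \<open>g R\<close> an almost optimal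
  infinitesimal rigid motion \<open>a g + S g (y - g x0)\<close>. Since \<open>R\<close> contains \<open>R' R''\<close> with \<open>R'\<close>
  generating \<open>G\<close> and the orbit of \<open>R''\<close> affinely spanning, the rigid motions at \<open>g\<close> and \<open>g r\<close>,
  \<open>r \<in> R'\<close>, agree up to the local energies. Chaining along words in \<open>R'\<close> bounds, for each fixed
  \<open>x \<in> G\<close>, both the defect \<open>W (g x) - W g - S g (g x x0 - g x0)\<close> and the change \<open>S (g x) - S g\<close>
  by local energies at finitely many translates of \<open>g\<close>, uniformly in the period. Applied to the
  conjugates of a lattice basis, this controls the translation defects \<open>W (t\<^sub>b g) - W g - S g b\<close>.
  What remains is the skew part \<open>S g\<close> itself, handled as in the classical Korn argument:
  translations commute, so summation by parts over a period cell exchanges two difference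
  operators, and by skewness the entry \<open>S b \<bullet> b'\<close> enters them with opposite signs.\<close>

section \<open>The Euclidean group\<close>

definition orth :: "'n::finite euc \<Rightarrow> bool" where
  "orth g \<longleftrightarrow> orthogonal_matrix (fst g)"

lemma orth_inverse:
  "orth g \<Longrightarrow> transpose (fst g) ** fst g = mat 1"
  "orth g \<Longrightarrow> fst g ** transpose (fst g) = mat 1"
  by (auto simp: orth_def orthogonal_matrix_def)

lemma fst_emul [simp]: "fst (emul g h) = fst g ** fst h"
  and snd_emul [simp]: "snd (emul g h) = snd g + fst g *v snd h"
  and fst_einv [simp]: "fst (einv g) = transpose (fst g)"
  and snd_einv [simp]: "snd (einv g) = - (transpose (fst g) *v snd g)"
  by (simp_all add: emul_def einv_def)

lemma emul_assoc: "emul (emul a b) c = emul a (emul b c)"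
  by (simp add: emul_def matrix_mul_assoc matrix_vector_mul_assoc matrix_vector_right_distrib add.assoc)

lemma emul_eid [simp]: "emul eid g = g" "emul g eid = g"
  by (simp_all add: emul_def eid_def)

lemma matrix_vector_mult_uminus_left: "(- A) *v x = - (A *v (x::real^'n::finite))"
  by (simp add: vec_eq_iff matrix_vector_mult_def sum_negf)

lemma einv_cancel [simp]:
  assumes "orth g"
  shows "emul (einv g) g = eid" "emul g (einv g) = eid"
    "emul (einv g) (emul g h) = h" "emul g (emul (einv g) h) = h"
proof -
  note inv = orth_inverse[OF assms]
  show left: "emul (einv g) g = eid"
    by (simp add: emul_def einv_def eid_def inv matrix_vector_mul_assoc[symmetric])
  have "fst g *v (transpose (fst g) *v snd g) = snd g"
    by (metis matrix_vector_mul_assoc inv(2) matrix_vector_mul_lid)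
  then show right: "emul g (einv g) = eid"
    by (simp add: emul_def einv_def eid_def inv vec.neg)
  show "emul (einv g) (emul g h) = h" by (metis left emul_assoc emul_eid(1))
  show "emul g (emul (einv g) h) = h" by (metis right emul_assoc emul_eid(1))
qed

lemma orth_emul [simp]: "orth g \<Longrightarrow> orth h \<Longrightarrow> orth (emul g h)"
  by (simp add: orth_def orthogonal_matrix_mul)

lemma orth_einv [simp]: "orth g \<Longrightarrow> orth (einv g)"
  by (simp add: orth_def)

lemma einv_einv [simp]: "orth g \<Longrightarrow> einv (einv g) = g"
  by (metis einv_cancel(2,3) emul_eid(2) orth_einv)

lemma einv_emul:
  assumes "orth a" "orth b"
  shows "einv (emul a b) = emul (einv b) (einv a)"
proof -
  have "emul (emul (einv b) (einv a)) (emul a b) = eid"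
    by (simp add: emul_assoc assms)
  then have "emul (einv b) (einv a) = emul eid (einv (emul a b))"
    by (metis emul_assoc einv_cancel(2) emul_eid(2) orth_emul assms)
  then show ?thesis by simp
qed

lemma norm_orthogonal_matrix_vector:
  "orthogonal_matrix (Q::real^'n::finite^'n) \<Longrightarrow> norm (Q *v x) = norm x"
  by (metis orthogonal_transformation_matrix orthogonal_transformation_norm
      matrix_of_matrix_vector_mul matrix_vector_mul_linear)

lemma eact_emul: "eact (emul g h) x = eact g (eact h x)"
  by (simp add: eact_def matrix_vector_mul_assoc[symmetric] matrix_vector_right_distrib add_ac)

lemma eact_diff: "eact g y - eact g z = fst g *v (y - z)"
  by (simp add: eact_def matrix_vector_mult_diff_distrib)

lemma norm_eact_emul_diff:
  "orth g \<Longrightarrow> norm (eact (emul g y) x - eact g x) = norm (eact y x - x)"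
  by (simp add: eact_emul eact_diff orth_def norm_orthogonal_matrix_vector)

lemma skew_inner:
  assumes "skew S"
  shows "inner (S *v x) y = - inner (S *v y) (x::real^'n::finite)"
proof -
  have "inner (S *v x) y = inner x (transpose S *v y)"
    by (metis dot_lmul_matrix vector_transpose_matrix)
  also have "\<dots> = - inner (S *v y) x"
    using assms by (simp add: skew_def matrix_vector_mult_uminus_left inner_commute)
  finally show ?thesis .
qed

lemma skew_inner_self: "skew S \<Longrightarrow> inner (S *v x) (x::real^'n::finite) = 0"
  using skew_inner[of S x x] by simp

lemma skew_conj: "skew S \<Longrightarrow> skew (A ** S ** transpose (A::real^'n::finite^'n))"
proof -
  have neg: "A ** (- S) = - (A ** S)" "(- (A ** S)) ** B = - (A ** S ** B)" for A S B :: "real^'n^'n"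
    by (simp_all add: vec_eq_iff matrix_matrix_mult_def sum_negf)
  show "skew S \<Longrightarrow> skew (A ** S ** transpose A)"
    by (simp add: skew_def matrix_transpose_mul matrix_mul_assoc neg)
qed

lemma fst_epow: "fst t = mat 1 \<Longrightarrow> fst (epow t N) = mat 1"
  by (induction N) (auto simp: eid_def)

lemma fst_TN: "t \<in> TN G N \<Longrightarrow> fst t = mat 1"
  by (auto simp: TN_def transl_def fst_epow)

locale euc_group =
  fixes G :: "'n::finite euc set"
  assumes subgroup: "euc_subgroup G"
begin

lemma orth: "g \<in> G \<Longrightarrow> orth g"
  and emul_closed: "g \<in> G \<Longrightarrow> h \<in> G \<Longrightarrow> emul g h \<in> G"
  and einv_closed: "g \<in> G \<Longrightarrow> einv g \<in> G"
  and eid_closed: "eid \<in> G"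
  using subgroup by (simp_all add: euc_subgroup_def orth_def)

end

section \<open>Periodic cells\<close>

definition cell_periodic :: "'n::finite euc set \<Rightarrow> nat \<Rightarrow> ('n euc \<Rightarrow> 'a) \<Rightarrow> bool" where
  "cell_periodic G N f \<longleftrightarrow> (\<forall>g\<in>G. \<forall>t\<in>TN G N. f (emul g t) = f g)"

locale periodic_cells = euc_group G for G :: "'n::finite euc set" +
  fixes N :: nat and C :: "'n euc set"
  assumes normal: "normal_subgroup (TN G N) G"
    and reps: "coset_reps G N C"
    and finite_C: "finite C"
begin

abbreviation "H \<equiv> TN G N"

lemma H_subset: "H \<subseteq> G"
  and H_emul: "s \<in> H \<Longrightarrow> t \<in> H \<Longrightarrow> emul s t \<in> H"
  and H_einv: "t \<in> H \<Longrightarrow> einv t \<in> H"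
  and H_conj: "g \<in> G \<Longrightarrow> t \<in> H \<Longrightarrow> emul (emul g t) (einv g) \<in> H"
  using normal by (auto simp: normal_subgroup_def euc_subgroup_def)

lemma C_subset: "C \<subseteq> G"
  using reps by (simp add: coset_reps_def)

lemma unique_rep: "g \<in> G \<Longrightarrow> \<exists>!c. c \<in> C \<and> emul (einv c) g \<in> H"
  using reps by (simp add: coset_reps_def)

definition rep :: "'n euc \<Rightarrow> 'n euc" where
  "rep g = (THE c. c \<in> C \<and> emul (einv c) g \<in> H)"

lemma rep: "g \<in> G \<Longrightarrow> rep g \<in> C \<and> emul (einv (rep g)) g \<in> H"
  unfolding rep_def by (rule theI'[OF unique_rep])

lemma rep_unique: "g \<in> G \<Longrightarrow> c \<in> C \<Longrightarrow> emul (einv c) g \<in> H \<Longrightarrow> rep g = c"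
  using rep unique_rep by blast

lemma rep_of_C: "c \<in> C \<Longrightarrow> rep c = c"
  using C_subset normal
  by (intro rep_unique) (auto simp: orth normal_subgroup_def euc_subgroup_def)

lemma rep_eq_imp_same_coset:
  assumes "g1 \<in> G" "g2 \<in> G" "rep g1 = rep g2"
  shows "emul (einv g1) g2 \<in> H"
proof -
  define d where "d = rep g1"
  have in_H: "emul (einv d) g1 \<in> H" "emul (einv d) g2 \<in> H"
    using rep assms unfolding d_def by metis+
  have "orth d" using rep[OF assms(1)] C_subset orth unfolding d_def by blast
  then have "emul (einv (emul (einv d) g1)) (emul (einv d) g2) = emul (einv g1) g2"
    using orth[OF assms(1)] by (simp add: einv_emul emul_assoc)
  then show ?thesis using in_H H_emul H_einv by metis
qed

lemma same_coset_imp_eq: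
  assumes "c1 \<in> C" "c2 \<in> C" "emul (einv c1) c2 \<in> H"
  shows "c1 = c2"
  using rep_unique[of c2 c1] rep_of_C[of c2] assms C_subset by blast

lemma cell_periodic_rep: "cell_periodic G N f \<Longrightarrow> g \<in> G \<Longrightarrow> f (rep g) = f g"
  unfolding cell_periodic_def
  by (metis rep C_subset subsetD orth einv_cancel(4))

lemma rep_emul_H: "g \<in> G \<Longrightarrow> t \<in> H \<Longrightarrow> rep (emul g t) = rep g"
  using rep[of g] H_emul H_subset C_subset
  by (intro rep_unique) (auto simp: emul_assoc[symmetric] intro: emul_closed)

lemma cell_periodic_comp_rep: "cell_periodic G N (\<lambda>g. f (rep g))"
  unfolding cell_periodic_def by (simp add: rep_emul_H)

lemma sum_reindex_cells:
  assumes into_G: "\<And>c. c \<in> C \<Longrightarrow> \<phi> c \<in> G"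
    and coset_inj: "\<And>c1 c2. c1 \<in> C \<Longrightarrow> c2 \<in> C \<Longrightarrow>
        emul (einv (\<phi> c1)) (\<phi> c2) \<in> H \<Longrightarrow> emul (einv c1) c2 \<in> H"
    and f: "cell_periodic G N f"
  shows "(\<Sum>c\<in>C. f (\<phi> c)) = (\<Sum>c\<in>C. f c)"
proof -
  have inj: "inj_on (rep \<circ> \<phi>) C"
    by (rule inj_onI) (use into_G coset_inj rep_eq_imp_same_coset same_coset_imp_eq in auto)
  have "(rep \<circ> \<phi>) ` C \<subseteq> C"
    using rep into_G by (simp add: image_subset_iff)
  then have "(rep \<circ> \<phi>) ` C = C"
    using endo_inj_surj[OF finite_C _ inj] by blast
  then have "(\<Sum>c\<in>C. f c) = (\<Sum>c\<in>C. f (rep (\<phi> c)))"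
    using sum.reindex[OF inj, of f] by simp
  also have "\<dots> = (\<Sum>c\<in>C. f (\<phi> c))"
    using cell_periodic_rep[OF f] into_G by simp
  finally show ?thesis by simp
qed

lemma sum_emul_left:
  assumes y: "y \<in> G" and f: "cell_periodic G N f"
  shows "(\<Sum>c\<in>C. f (emul y c)) = (\<Sum>c\<in>C. f c)"
proof (rule sum_reindex_cells[OF _ _ f])
  fix c1 c2 assume "c1 \<in> C" "c2 \<in> C"
  then have "orth c1" "orth c2" "orth y" using C_subset y orth by blast+
  then show "emul (einv (emul y c1)) (emul y c2) \<in> H \<Longrightarrow> emul (einv c1) c2 \<in> H"
    by (simp add: einv_emul emul_assoc)
qed (use y C_subset emul_closed in blast)

lemma sum_emul_right:
  assumes y: "y \<in> G" and f: "cell_periodic G N f"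
  shows "(\<Sum>c\<in>C. f (emul c y)) = (\<Sum>c\<in>C. f c)"
proof (rule sum_reindex_cells[OF _ _ f])
  fix c1 c2 assume "c1 \<in> C" "c2 \<in> C"
  then have o: "orth c1" "orth c2" "orth y" using C_subset y orth by blast+
  assume "emul (einv (emul c1 y)) (emul c2 y) \<in> H"
  then have "emul (emul y (emul (einv (emul c1 y)) (emul c2 y))) (einv y) \<in> H"
    using H_conj y by blast
  then show "emul (einv c1) c2 \<in> H"
    using o by (simp add: einv_emul emul_assoc)
qed (use y C_subset emul_closed in blast)

end

section \<open>Bounds on finite spanning sets\<close>

lemma spanning_set_coeffs_bounded:
  fixes Z :: "'a::euclidean_space set"
  assumes fin: "finite Z" and sp: "span Z = UNIV"
  shows "\<exists>\<kappa>\<ge>0. \<forall>y. \<exists>l. y = (\<Sum>z\<in>Z. l z *\<^sub>R z) \<and> (\<Sum>z\<in>Z. \<bar>l z\<bar>) \<le> \<kappa> * norm y"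
proof -
  have "\<exists>m. (\<Sum>z\<in>Z. m z *\<^sub>R z) = i" for i
  proof -
    have "i \<in> range (\<lambda>u. \<Sum>v\<in>Z. u v *\<^sub>R v)" using span_finite[OF fin] sp by simp
    thus ?thesis by auto
  qed
  then obtain m where m: "\<And>i. (\<Sum>z\<in>Z. m i z *\<^sub>R z) = i" by metis
  define \<kappa> where "\<kappa> = (\<Sum>z\<in>Z. \<Sum>i\<in>Basis. \<bar>m i z\<bar>)"
  have k0: "\<kappa> \<ge> 0" unfolding \<kappa>_def by (intro sum_nonneg) auto
  have "\<exists>l. y = (\<Sum>z\<in>Z. l z *\<^sub>R z) \<and> (\<Sum>z\<in>Z. \<bar>l z\<bar>) \<le> \<kappa> * norm y" for y
  proof (intro exI conjI)
    let ?l = "\<lambda>z. \<Sum>i\<in>Basis. (inner y i) * m i z"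
    have "(\<Sum>z\<in>Z. ?l z *\<^sub>R z) = (\<Sum>z\<in>Z. \<Sum>i\<in>Basis. (inner y i) *\<^sub>R (m i z *\<^sub>R z))"
      by (simp add: scaleR_sum_left)
    also have "\<dots> = (\<Sum>i\<in>Basis. (inner y i) *\<^sub>R (\<Sum>z\<in>Z. m i z *\<^sub>R z))"
      by (subst sum.swap) (simp add: scaleR_sum_right)
    also have "\<dots> = (\<Sum>i\<in>Basis. (inner y i) *\<^sub>R i)" by (simp add: m)
    also have "\<dots> = y" by (rule euclidean_representation)
    finally show "y = (\<Sum>z\<in>Z. ?l z *\<^sub>R z)" by simp
    have "(\<Sum>z\<in>Z. \<bar>?l z\<bar>) \<le> (\<Sum>z\<in>Z. \<Sum>i\<in>Basis. norm y * \<bar>m i z\<bar>)"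
    proof (intro sum_mono)
      fix z
      have "\<bar>?l z\<bar> \<le> (\<Sum>i\<in>Basis. \<bar>inner y i * m i z\<bar>)" by (rule sum_abs)
      also have "\<dots> \<le> (\<Sum>i\<in>Basis. norm y * \<bar>m i z\<bar>)"
        by (intro sum_mono) (simp add: abs_mult Basis_le_norm mult_right_mono)
      finally show "\<bar>?l z\<bar> \<le> (\<Sum>i\<in>Basis. norm y * \<bar>m i z\<bar>)" .
    qed
    also have "\<dots> = \<kappa> * norm y" by (simp add: \<kappa>_def sum_distrib_left mult.commute)
    finally show "(\<Sum>z\<in>Z. \<bar>?l z\<bar>) \<le> \<kappa> * norm y" .
  qed
  thus ?thesis using k0 by (intro exI[of _ \<kappa>]) simp
qed

lemma matrix_vector_bound_on_spanning_set:
  fixes Z :: "(real^'n::finite) set"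
  assumes fin: "finite Z" and sp: "span Z = UNIV"
  shows "\<exists>\<kappa>\<ge>0. \<forall>(S::real^'n^'n) y. norm (S *v y) \<le> \<kappa> * norm y * (\<Sum>z\<in>Z. norm (S *v z))"
proof -
  obtain \<kappa> where k: "\<kappa> \<ge> 0" "\<And>y. \<exists>l. y = (\<Sum>z\<in>Z. l z *\<^sub>R z) \<and> (\<Sum>z\<in>Z. \<bar>l z\<bar>) \<le> \<kappa> * norm y"
    using spanning_set_coeffs_bounded[OF fin sp] by blast
  have "norm (S *v y) \<le> \<kappa> * norm y * (\<Sum>z\<in>Z. norm (S *v z))" for S :: "real^'n^'n" and y
  proof -
    obtain l where l: "y = (\<Sum>z\<in>Z. l z *\<^sub>R z)" "(\<Sum>z\<in>Z. \<bar>l z\<bar>) \<le> \<kappa> * norm y" using k(2) by blast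
    let ?T = "\<Sum>z\<in>Z. norm (S *v z)"
    have T0: "?T \<ge> 0" by (intro sum_nonneg) auto
    have "S *v y = (\<Sum>z\<in>Z. l z *\<^sub>R (S *v z))" by (simp add: l(1) vec.sum matrix_vector_mult_scaleR)
    hence "norm (S *v y) \<le> (\<Sum>z\<in>Z. norm (l z *\<^sub>R (S *v z)))" by (metis norm_sum)
    also have "\<dots> \<le> (\<Sum>z\<in>Z. \<bar>l z\<bar> * ?T)"
    proof (intro sum_mono)
      fix z assume z: "z \<in> Z"
      have "norm (S *v z) \<le> ?T" by (rule member_le_sum[OF z]) (auto simp: fin)
      thus "norm (l z *\<^sub>R (S *v z)) \<le> \<bar>l z\<bar> * ?T" by (simp add: mult_left_mono)
    qed
    also have "\<dots> = (\<Sum>z\<in>Z. \<bar>l z\<bar>) * ?T" by (simp add: sum_distrib_right)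
    also have "\<dots> \<le> \<kappa> * norm y * ?T" by (rule mult_right_mono[OF l(2) T0])
    finally show ?thesis .
  qed
  hence "\<forall>(S::real^'n^'n) y. norm (S *v y) \<le> \<kappa> * norm y * (\<Sum>z\<in>Z. norm (S *v z))" by blast
  thus ?thesis using k(1) by (intro exI[of _ \<kappa>]) simp
qed

lemma norm_bound_by_inner_on_spanning_set:
  fixes B :: "(real^'n::finite) set"
  assumes fin: "finite B" and sp: "span B = UNIV"
  shows "\<exists>\<kappa>\<ge>0. \<forall>v. norm v \<le> \<kappa> * (\<Sum>b\<in>B. \<bar>inner v b\<bar>)"
proof -
  obtain \<kappa> where k: "\<kappa> \<ge> 0" "\<And>y. \<exists>l. y = (\<Sum>z\<in>B. l z *\<^sub>R z) \<and> (\<Sum>z\<in>B. \<bar>l z\<bar>) \<le> \<kappa> * norm y"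
    using spanning_set_coeffs_bounded[OF fin sp] by blast
  have "norm v \<le> \<kappa> * (\<Sum>b\<in>B. \<bar>inner v b\<bar>)" for v
  proof -
    obtain l where l: "v = (\<Sum>z\<in>B. l z *\<^sub>R z)" "(\<Sum>z\<in>B. \<bar>l z\<bar>) \<le> \<kappa> * norm v" using k(2) by blast
    let ?T = "\<Sum>b\<in>B. \<bar>inner v b\<bar>"
    have T0: "?T \<ge> 0" by (intro sum_nonneg) auto
    have "(norm v)\<^sup>2 = inner v v" by (simp add: power2_norm_eq_inner)
    also have "\<dots> = (\<Sum>z\<in>B. l z * inner v z)" by (subst (2) l(1)) (simp add: inner_sum_right)
    also have "\<dots> \<le> (\<Sum>z\<in>B. \<bar>l z\<bar> * ?T)"
    proof (intro sum_mono)
      fix z assume z: "z \<in> B"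
      have "l z * inner v z \<le> \<bar>l z\<bar> * \<bar>inner v z\<bar>" by (metis abs_ge_self abs_mult)
      also have "\<dots> \<le> \<bar>l z\<bar> * ?T" by (intro mult_left_mono) (auto intro: member_le_sum[OF z] fin)
      finally show "l z * inner v z \<le> \<bar>l z\<bar> * ?T" .
    qed
    also have "\<dots> = (\<Sum>z\<in>B. \<bar>l z\<bar>) * ?T" by (simp add: sum_distrib_right)
    also have "\<dots> \<le> \<kappa> * norm v * ?T" by (rule mult_right_mono[OF l(2) T0])
    finally have *: "norm v * norm v \<le> norm v * (\<kappa> * ?T)" by (simp add: power2_eq_square mult_ac)
    show ?thesis
    proof (cases "norm v = 0")
      case True thus ?thesis using k(1) T0 by simp
    next
      case False thus ?thesis using * by (simp add: mult_le_cancel_left)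
    qed
  qed
  hence "\<forall>v. norm v \<le> \<kappa> * (\<Sum>b\<in>B. \<bar>inner v b\<bar>)" by blast
  thus ?thesis using k(1) by (intro exI[of _ \<kappa>]) simp
qed

lemma sum_list_squared_le:
  fixes f :: "'a \<Rightarrow> real"
  shows "(sum_list (map f xs))\<^sup>2 \<le> real (length xs) * sum_list (map (\<lambda>x. (f x)\<^sup>2) xs)"
proof -
  have a: "sum_list (map f xs) = (\<Sum>i\<in>{0..<length xs}. f (xs ! i))" by (simp add: sum_list_sum_nth)
  have b: "sum_list (map (\<lambda>x. (f x)\<^sup>2) xs) = (\<Sum>i\<in>{0..<length xs}. (f (xs ! i))\<^sup>2)" by (simp add: sum_list_sum_nth)
  show ?thesis using sum_squared_le_sum_of_squares[of "\<lambda>i. f (xs ! i)" "{0..<length xs}"]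
    by (simp add: a b mult.commute)
qed


lemma matrix_vector_bound_by_entries:
  fixes B :: "(real^'n::finite) set"
  assumes fin: "finite B" and sp: "span B = UNIV"
  shows "\<exists>\<kappa>\<ge>0. \<forall>(M::real^'n^'n) y.
    norm (M *v y) \<le> \<kappa> * norm y * (\<Sum>(b, b')\<in>B \<times> B. \<bar>inner (M *v b) b'\<bar>)"
proof -
  obtain \<kappa>1 where \<kappa>1: "\<kappa>1 \<ge> 0" "\<And>(M::real^'n^'n) y. norm (M *v y) \<le> \<kappa>1 * norm y * (\<Sum>b\<in>B. norm (M *v b))"
    using matrix_vector_bound_on_spanning_set[OF fin sp] by blast
  obtain \<kappa>2 where \<kappa>2: "\<kappa>2 \<ge> 0" "\<And>v::real^'n. norm v \<le> \<kappa>2 * (\<Sum>b\<in>B. \<bar>inner v b\<bar>)"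
    using norm_bound_by_inner_on_spanning_set[OF fin sp] by blast
  have "norm (M *v y) \<le> (\<kappa>1 * \<kappa>2) * norm y * (\<Sum>(b, b')\<in>B \<times> B. \<bar>inner (M *v b) b'\<bar>)"
    for M :: "real^'n^'n" and y
  proof -
    have "(\<Sum>b\<in>B. norm (M *v b)) \<le> (\<Sum>b\<in>B. \<kappa>2 * (\<Sum>b'\<in>B. \<bar>inner (M *v b) b'\<bar>))"
      by (intro sum_mono \<kappa>2(2))
    also have "\<dots> = \<kappa>2 * (\<Sum>(b, b')\<in>B \<times> B. \<bar>inner (M *v b) b'\<bar>)"
      by (simp add: sum_distrib_left sum.cartesian_product case_prod_beta)
    finally have "\<kappa>1 * norm y * (\<Sum>b\<in>B. norm (M *v b)) \<le> \<kappa>1 * norm y * (\<kappa>2 * (\<Sum>(b, b')\<in>B \<times> B. \<bar>inner (M *v b) b'\<bar>))"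
      using \<kappa>1(1) by (intro mult_left_mono) auto
    then show ?thesis using \<kappa>1(2)[of M y] by (simp add: mult_ac)
  qed
  then show ?thesis using \<kappa>1(1) \<kappa>2(1) by (intro exI[of _ "\<kappa>1 * \<kappa>2"]) auto
qed

section \<open>Rigid fits and their propagation along words\<close>

text \<open>Here \<open>W g\<close> stands for \<open>rot g *v u g\<close>, the displacement at \<open>g\<close> in the global frame, and
  \<open>y \<mapsto> a g + S g *v (y - eact g x0)\<close> is an infinitesimal rigid motion attached to \<open>g\<close>;
  \<open>local_energy\<close> measures how well it fits \<open>W\<close> on the stencil \<open>g R\<close>.\<close>

definition residual :: "real^'n::finite \<Rightarrow> ('n euc \<Rightarrow> real^'n) \<Rightarrow> ('n euc \<Rightarrow> real^'n) \<Rightarrow>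
    ('n euc \<Rightarrow> real^'n^'n) \<Rightarrow> 'n euc \<Rightarrow> 'n euc \<Rightarrow> real^'n" where
  "residual x0 W a S g h = W (emul g h) - a g - S g *v (eact (emul g h) x0 - eact g x0)"

definition local_energy :: "'n::finite euc set \<Rightarrow> real^'n \<Rightarrow> ('n euc \<Rightarrow> real^'n) \<Rightarrow>
    ('n euc \<Rightarrow> real^'n) \<Rightarrow> ('n euc \<Rightarrow> real^'n^'n) \<Rightarrow> 'n euc \<Rightarrow> real" where
  "local_energy R x0 W a S g = (\<Sum>h\<in>R. (norm (residual x0 W a S g h))\<^sup>2)"

definition word_energy :: "'n::finite euc set \<Rightarrow> real^'n \<Rightarrow> ('n euc \<Rightarrow> real^'n) \<Rightarrow>
    ('n euc \<Rightarrow> real^'n) \<Rightarrow> ('n euc \<Rightarrow> real^'n^'n) \<Rightarrow> 'n euc list \<Rightarrow> 'n euc \<Rightarrow> real" where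
  "word_energy R x0 W a S fs g = sum_list (map (\<lambda>f. sqrt (local_energy R x0 W a S (emul g f))) fs)"

definition defect :: "real^'n::finite \<Rightarrow> ('n euc \<Rightarrow> real^'n) \<Rightarrow> ('n euc \<Rightarrow> real^'n^'n) \<Rightarrow>
    'n euc \<Rightarrow> 'n euc \<Rightarrow> real^'n" where
  "defect x0 W S g x = W (emul g x) - W g - S g *v (eact (emul g x) x0 - eact g x0)"

lemma local_energy_nonneg [simp]: "local_energy R x0 W a S g \<ge> 0"
  unfolding local_energy_def by (intro sum_nonneg) auto

lemma norm_residual_le:
  "finite R \<Longrightarrow> h \<in> R \<Longrightarrow> norm (residual x0 W a S g h) \<le> sqrt (local_energy R x0 W a S g)"
  unfolding local_energy_def
  by (intro real_le_rsqrt member_le_sum[of h R "\<lambda>h. (norm (residual x0 W a S g h))\<^sup>2"]) auto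

lemma norm_defect_le:
  assumes "finite R" "eid \<in> R" "x \<in> R"
  shows "norm (defect x0 W S g x) \<le> 2 * sqrt (local_energy R x0 W a S g)"
proof -
  have "defect x0 W S g x = residual x0 W a S g x - residual x0 W a S g eid"
    by (simp add: defect_def residual_def)
  then have "norm (defect x0 W S g x) \<le> norm (residual x0 W a S g x) + norm (residual x0 W a S g eid)"
    by (simp add: norm_triangle_ineq4)
  then show ?thesis
    using norm_residual_le[OF assms(1,3), of x0 W a S g] norm_residual_le[OF assms(1,2), of x0 W a S g]
    by linarith
qed

lemma norm_W_diff_le:
  assumes "finite R" "eid \<in> R" "h \<in> R"
  shows "norm (W (emul c h) - W c) \<le>
    2 * sqrt (local_energy R x0 W a S c) + norm (S c *v (eact (emul c h) x0 - eact c x0))"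
proof -
  have "W (emul c h) - W c = defect x0 W S c h + S c *v (eact (emul c h) x0 - eact c x0)"
    by (simp add: defect_def)
  then have "norm (W (emul c h) - W c) \<le>
      norm (defect x0 W S c h) + norm (S c *v (eact (emul c h) x0 - eact c x0))"
    by (simp only: norm_triangle_ineq)
  then show ?thesis
    using norm_defect_le[OF assms, of x0 W S c a] by linarith
qed

lemma word_energy_nonneg: "word_energy R x0 W a S fs g \<ge> 0"
  unfolding word_energy_def by (intro sum_list_nonneg) auto

lemma word_energy_append:
  "word_energy R x0 W a S (xs @ ys) g = word_energy R x0 W a S xs g + word_energy R x0 W a S ys g"
  by (simp add: word_energy_def)

lemma word_energy_map_emul:
  "word_energy R x0 W a S (map (emul x) fs) g = word_energy R x0 W a S fs (emul g x)"
  by (simp add: word_energy_def comp_def emul_assoc)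

lemma defect_emul:
  "defect x0 W S g (emul x y) = defect x0 W S (emul g x) y
     + (S (emul g x) - S g) *v (eact (emul (emul g x) y) x0 - eact (emul g x) x0)
     + defect x0 W S g x"
  by (simp add: defect_def emul_assoc matrix_vector_mult_diff_distrib
      matrix_vector_mult_diff_rdistrib algebra_simps)

lemma norm_defect_emul_le:
  "norm (defect x0 W S g (emul x y)) \<le> norm (defect x0 W S (emul g x) y)
     + norm ((S (emul g x) - S g) *v (eact (emul (emul g x) y) x0 - eact (emul g x) x0))
     + norm (defect x0 W S g x)"
  unfolding defect_emul by (rule order_trans[OF norm_triangle_ineq add_right_mono[OF norm_triangle_ineq]])

lemma defect_einv:
  assumes "orth x"
  shows "defect x0 W S g (einv x) = (S g - S (emul g (einv x))) *v (eact g x0 - eact (emul g (einv x)) x0)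
     - defect x0 W S (emul g (einv x)) x"
  using assms by (simp add: defect_def emul_assoc matrix_vector_mult_diff_distrib
      matrix_vector_mult_diff_rdistrib algebra_simps)

locale korn_stencil = euc_group G for G :: "'n::finite euc set" +
  fixes R R' R'' :: "'n euc set" and x0 :: "real^'n"
  assumes R'_subset: "R' \<subseteq> G" and eid_R': "eid \<in> R'" and generated_R': "generated R' = G"
    and eid_R'': "eid \<in> R''" and finite_R'': "finite R''"
    and finite_R: "finite R" and emul_R'_R'': "\<And>g h. g \<in> R' \<Longrightarrow> h \<in> R'' \<Longrightarrow> emul g h \<in> R"
    and span_R'': "span ((\<lambda>h. eact h x0 - x0) ` R'') = UNIV"
begin

abbreviation "Z \<equiv> (\<lambda>h. eact h x0 - x0) ` R''"

lemma eid_R: "eid \<in> R"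
  using emul_R'_R''[OF eid_R' eid_R''] by simp

lemma R'_subset_R: "r \<in> R' \<Longrightarrow> r \<in> R"
  using emul_R'_R''[OF _ eid_R''] by (metis emul_eid(2))

lemma R''_subset_R: "h \<in> R'' \<Longrightarrow> h \<in> R"
  using emul_R'_R''[OF eid_R'] by (metis emul_eid(1))

definition controlled_by :: "'n euc list \<Rightarrow> real \<Rightarrow> 'n euc \<Rightarrow> bool" where
  "controlled_by fs K x \<longleftrightarrow> (\<forall>W a S g y. g \<in> G \<longrightarrow>
     norm (defect x0 W S g x) \<le> K * word_energy R x0 W a S fs g \<and>
     norm ((S (emul g x) - S g) *v y) \<le> K * norm y * word_energy R x0 W a S fs g)"

definition controlled :: "'n euc \<Rightarrow> bool" where
  "controlled x \<longleftrightarrow> (\<exists>fs K. set fs \<subseteq> G \<and> K \<ge> 0 \<and> controlled_by fs K x)"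

lemma controlled_byI:
  assumes "\<And>W a S g. g \<in> G \<Longrightarrow> norm (defect x0 W S g x) \<le> K * word_energy R x0 W a S fs g"
    and "\<And>W a S g y. g \<in> G \<Longrightarrow> norm ((S (emul g x) - S g) *v y) \<le> K * norm y * word_energy R x0 W a S fs g"
  shows "controlled_by fs K x"
  using assms unfolding controlled_by_def by blast

lemma controlled_byD:
  assumes "controlled_by fs K x" "g \<in> G"
  shows "norm (defect x0 W S g x) \<le> K * word_energy R x0 W a S fs g"
    and "norm ((S (emul g x) - S g) *v y) \<le> K * norm y * word_energy R x0 W a S fs g"
  using assms unfolding controlled_by_def by blast+

lemma controlled_by_append:
  assumes x: "controlled_by fs K x" and K: "0 \<le> K" "K \<le> K'"
  shows "controlled_by (fs @ fs') K' x"
proof (rule controlled_byI)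
  fix W a S g y assume g: "g \<in> G"
  let ?e = "word_energy R x0 W a S fs g" and ?e' = "word_energy R x0 W a S fs' g"
  have "K * ?e \<le> K' * (?e + ?e')"
    using K word_energy_nonneg[of R x0 W a S fs g] word_energy_nonneg[of R x0 W a S fs' g]
    by (simp add: mult_mono)
  then show "norm (defect x0 W S g x) \<le> K' * word_energy R x0 W a S (fs @ fs') g"
    using controlled_byD(1)[OF x g, of W S a] by (simp add: word_energy_append)
  from mult_left_mono[OF \<open>K * ?e \<le> _\<close> norm_ge_zero[of y]]
  show "norm ((S (emul g x) - S g) *v y) \<le> K' * norm y * word_energy R x0 W a S (fs @ fs') g"
    by (intro order_trans[OF controlled_byD(2)[OF x g]]) (simp add: word_energy_append mult_ac)
qed

lemma controlled_by_append_commute: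
  "controlled_by (fs' @ fs) K x \<longleftrightarrow> controlled_by (fs @ fs') K x"
  by (simp add: controlled_by_def word_energy_append add.commute)

lemma controlled_eid: "controlled eid"
  unfolding controlled_def controlled_by_def
  by (rule exI[of _ "[]"], rule exI[of _ 0]) (simp add: word_energy_def defect_def)

text \<open>The rigid motions at \<open>g\<close> and \<open>g r\<close> both fit \<open>W\<close> on \<open>g r R''\<close>, which lies in both stencils
  \<open>g R\<close> and \<open>g r R\<close>; hence their skew parts nearly agree on the vectors \<open>h x0 - x0\<close>, \<open>h \<in> R''\<close>.\<close>

lemma norm_skew_change_on_R'':
  assumes r: "r \<in> R'" and h: "h \<in> R''"
  shows "norm ((S (emul g r) - S g) *v (eact (emul (emul g r) h) x0 - eact (emul g r) x0))
    \<le> 2 * (sqrt (local_energy R x0 W a S g) + sqrt (local_energy R x0 W a S (emul g r)))"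
proof -
  let ?\<rho> = "residual x0 W a S"
  have "(S (emul g r) - S g) *v (eact (emul (emul g r) h) x0 - eact (emul g r) x0) =
      (?\<rho> g (emul r h) - ?\<rho> (emul g r) h) - (?\<rho> g r - ?\<rho> (emul g r) eid)"
    by (simp add: residual_def emul_assoc matrix_vector_mult_diff_distrib
        matrix_vector_mult_diff_rdistrib algebra_simps)
  also have "norm \<dots> \<le> norm (?\<rho> g (emul r h)) + norm (?\<rho> (emul g r) h)
      + (norm (?\<rho> g r) + norm (?\<rho> (emul g r) eid))"
    by (intro order_trans[OF norm_triangle_ineq4] add_mono norm_triangle_ineq4)
  also have "\<dots> \<le> 2 * (sqrt (local_energy R x0 W a S g) + sqrt (local_energy R x0 W a S (emul g r)))"
    using norm_residual_le[OF finite_R emul_R'_R''[OF r h], of x0 W a S g]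
      norm_residual_le[OF finite_R R''_subset_R[OF h], of x0 W a S "emul g r"]
      norm_residual_le[OF finite_R R'_subset_R[OF r], of x0 W a S g]
      norm_residual_le[OF finite_R eid_R, of x0 W a S "emul g r"]
    by simp
  finally show ?thesis .
qed

lemma norm_skew_change_generator:
  obtains \<kappa> where "\<kappa> \<ge> 0" and "\<And>r g W a S y. r \<in> R' \<Longrightarrow> g \<in> G \<Longrightarrow>
    norm ((S (emul g r) - S g) *v y) \<le>
      \<kappa> * norm y * (sqrt (local_energy R x0 W a S g) + sqrt (local_energy R x0 W a S (emul g r)))"
proof -
  obtain \<kappa> where \<kappa>: "\<kappa> \<ge> 0" "\<And>(M::real^'n^'n) y. norm (M *v y) \<le> \<kappa> * norm y * (\<Sum>z\<in>Z. norm (M *v z))"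
    using matrix_vector_bound_on_spanning_set[OF finite_imageI[OF finite_R''] span_R''] by blast
  have "norm ((S (emul g r) - S g) *v y) \<le>
      (2 * \<kappa> * real (card Z)) * norm y * (sqrt (local_energy R x0 W a S g) + sqrt (local_energy R x0 W a S (emul g r)))"
    if r: "r \<in> R'" and g: "g \<in> G" for r g W a S y
  proof -
    let ?E = "sqrt (local_energy R x0 W a S g) + sqrt (local_energy R x0 W a S (emul g r))"
    define A where "A = fst (emul g r)"
    have "r \<in> G" using r R'_subset by blast
    then have A: "orthogonal_matrix A"
      using orth[OF emul_closed[OF g]] by (simp add: A_def orth_def)
    define M where "M = (S (emul g r) - S g) ** A"
    have "(S (emul g r) - S g) *v y = M *v (transpose A *v y)"
      using A unfolding M_def orthogonal_matrix_def
      by (metis matrix_vector_mul_assoc matrix_vector_mul_lid)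
    moreover have "norm (transpose A *v y) = norm y"
      using A orthogonal_matrix_transpose norm_orthogonal_matrix_vector by blast
    ultimately have "norm ((S (emul g r) - S g) *v y) \<le> \<kappa> * norm y * (\<Sum>z\<in>Z. norm (M *v z))"
      using \<kappa>(2)[of M "transpose A *v y"] by simp
    also have "(\<Sum>z\<in>Z. norm (M *v z)) \<le> (\<Sum>z\<in>Z. 2 * ?E)"
    proof (rule sum_mono)
      fix z assume "z \<in> Z"
      then obtain h where h: "h \<in> R''" and z: "z = eact h x0 - x0" by blast
      have "M *v z = (S (emul g r) - S g) *v (eact (emul (emul g r) h) x0 - eact (emul g r) x0)"
        by (simp add: M_def z A_def eact_emul eact_diff matrix_vector_mul_assoc[symmetric])
      then show "norm (M *v z) \<le> 2 * ?E"
        using norm_skew_change_on_R''[OF r h] by simp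
    qed
    finally have "norm ((S (emul g r) - S g) *v y) \<le> \<kappa> * norm y * (\<Sum>z\<in>Z. 2 * ?E)"
      using \<kappa>(1) by (simp add: mult_left_mono)
    then show ?thesis by (simp add: algebra_simps)
  qed
  then show thesis using that[of "2 * \<kappa> * real (card Z)"] \<kappa>(1) by simp
qed

lemma controlled_generator:
  assumes r: "r \<in> R'"
  shows "controlled r"
proof -
  obtain \<kappa> where \<kappa>: "\<kappa> \<ge> 0" "\<And>r g W a S y. r \<in> R' \<Longrightarrow> g \<in> G \<Longrightarrow>
      norm ((S (emul g r) - S g) *v y) \<le>
        \<kappa> * norm y * (sqrt (local_energy R x0 W a S g) + sqrt (local_energy R x0 W a S (emul g r)))"
    using norm_skew_change_generator by blast
  have energy: "word_energy R x0 W a S [eid, r] g =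
      sqrt (local_energy R x0 W a S g) + sqrt (local_energy R x0 W a S (emul g r))" for W a S g
    by (simp add: word_energy_def)
  have "controlled_by [eid, r] (2 + \<kappa>) r"
  proof (rule controlled_byI)
    fix W a S g y assume g: "g \<in> G"
    have "norm (defect x0 W S g r) \<le> 2 * sqrt (local_energy R x0 W a S g)"
      using norm_defect_le[OF finite_R eid_R R'_subset_R[OF r]] .
    then show "norm (defect x0 W S g r) \<le> (2 + \<kappa>) * word_energy R x0 W a S [eid, r] g"
      unfolding energy using \<kappa>(1) by (simp add: distrib_right add_increasing2)
    show "norm ((S (emul g r) - S g) *v y) \<le> (2 + \<kappa>) * norm y * word_energy R x0 W a S [eid, r] g"
      unfolding energy using \<kappa>(2)[OF r g, of S y W a]
      by (rule order_trans) (simp add: mult_right_mono)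
  qed
  moreover have "set [eid, r] \<subseteq> G" using r R'_subset eid_closed by auto
  ultimately show ?thesis
    unfolding controlled_def using \<kappa>(1) by (intro exI[of _ "[eid, r]"] exI[of _ "2 + \<kappa>"]) auto
qed

lemma controlled_emul:
  assumes cx: "controlled x" and cy: "controlled y" and xG: "x \<in> G"
  shows "controlled (emul x y)"
proof -
  obtain fs1 K1 where fs1: "set fs1 \<subseteq> G" and K1: "K1 \<ge> 0" and x: "controlled_by fs1 K1 x"
    using cx unfolding controlled_def by blast
  obtain fs2 K2 where fs2: "set fs2 \<subseteq> G" and K2: "K2 \<ge> 0" and y: "controlled_by fs2 K2 y"
    using cy unfolding controlled_def by blast
  define c where "c = norm (eact y x0 - x0)"
  define K where "K = K1 + K2 + K1 * c"
  define fs where "fs = fs1 @ map (emul x) fs2"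
  have "controlled_by fs K (emul x y)"
  proof (rule controlled_byI)
    fix W a S g v assume g: "g \<in> G"
    have gx: "emul g x \<in> G" using emul_closed[OF g xG] .
    let ?e1 = "word_energy R x0 W a S fs1 g" and ?e2 = "word_energy R x0 W a S fs2 (emul g x)"
    have e: "?e1 \<ge> 0" "?e2 \<ge> 0" by (rule word_energy_nonneg)+
    have energy: "word_energy R x0 W a S fs g = ?e1 + ?e2"
      by (simp add: fs_def word_energy_append word_energy_map_emul)
    have "norm ((S (emul g x) - S g) *v (eact (emul (emul g x) y) x0 - eact (emul g x) x0)) \<le> K1 * c * ?e1"
      using controlled_byD(2)[OF x g, of S "eact (emul (emul g x) y) x0 - eact (emul g x) x0" W a]
        norm_eact_emul_diff[OF orth[OF gx], of y x0] by (simp add: c_def mult_ac)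
    then have "norm (defect x0 W S g (emul x y)) \<le> K2 * ?e2 + K1 * c * ?e1 + K1 * ?e1"
      using norm_defect_emul_le[of x0 W S g x y]
        controlled_byD(1)[OF x g, of W S a] controlled_byD(1)[OF y gx, of W S a] by linarith
    also have "\<dots> \<le> K * word_energy R x0 W a S fs g"
      using e K1 K2 by (simp add: K_def energy c_def algebra_simps)
    finally show "norm (defect x0 W S g (emul x y)) \<le> K * word_energy R x0 W a S fs g" .
    have "norm ((S (emul g (emul x y)) - S g) *v v) \<le>
        norm ((S (emul (emul g x) y) - S (emul g x)) *v v) + norm ((S (emul g x) - S g) *v v)"
      using norm_triangle_ineq[of "(S (emul (emul g x) y) - S (emul g x)) *v v" "(S (emul g x) - S g) *v v"]
      by (simp add: emul_assoc matrix_vector_mult_diff_rdistrib)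
    then have "norm ((S (emul g (emul x y)) - S g) *v v) \<le> K2 * norm v * ?e2 + K1 * norm v * ?e1"
      using controlled_byD(2)[OF x g, of S v W a] controlled_byD(2)[OF y gx, of S v W a] by linarith
    also have "\<dots> \<le> K * norm v * word_energy R x0 W a S fs g"
      using e K1 K2 by (simp add: K_def energy c_def algebra_simps)
    finally show "norm ((S (emul g (emul x y)) - S g) *v v) \<le> K * norm v * word_energy R x0 W a S fs g" .
  qed
  moreover have "K \<ge> 0" using K1 K2 by (simp add: K_def c_def)
  moreover have "set fs \<subseteq> G"
    using fs1 fs2 xG by (auto simp: fs_def intro!: emul_closed)
  ultimately show ?thesis unfolding controlled_def by blast
qed

lemma controlled_einv:
  assumes cx: "controlled x" and xG: "x \<in> G"
  shows "controlled (einv x)"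
proof -
  obtain fs K where fs: "set fs \<subseteq> G" and K: "K \<ge> 0" and x: "controlled_by fs K x"
    using cx unfolding controlled_def by blast
  have ox: "orth x" using orth[OF xG] .
  define c where "c = norm (eact x x0 - x0)"
  define K' where "K' = K + K * c"
  define fs' where "fs' = map (emul (einv x)) fs"
  have "controlled_by fs' K' (einv x)"
  proof (rule controlled_byI)
    fix W a S g v assume g: "g \<in> G"
    define g' where "g' = emul g (einv x)"
    have g'G: "g' \<in> G" using emul_closed[OF g einv_closed[OF xG]] by (simp add: g'_def)
    have g'x: "emul g' x = g" using ox by (simp add: g'_def emul_assoc)
    let ?e = "word_energy R x0 W a S fs g'"
    have e: "?e \<ge> 0" by (rule word_energy_nonneg)
    have energy: "word_energy R x0 W a S fs' g = ?e"
      by (simp add: fs'_def word_energy_map_emul g'_def)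
    note step = controlled_byD[OF x g'G, unfolded g'x]
    have "norm ((S g - S g') *v (eact g x0 - eact g' x0)) \<le> K * c * ?e"
      using step(2)[of S "eact g x0 - eact g' x0" W a] norm_eact_emul_diff[OF orth[OF g'G], of x x0] g'x
      by (simp add: c_def mult_ac)
    moreover have "norm (defect x0 W S g (einv x)) \<le>
        norm ((S g - S g') *v (eact g x0 - eact g' x0)) + norm (defect x0 W S g' x)"
      unfolding defect_einv[OF ox] g'_def[symmetric] by (rule norm_triangle_ineq4)
    ultimately have "norm (defect x0 W S g (einv x)) \<le> K * c * ?e + K * ?e"
      using step(1)[of W S a] by linarith
    also have "\<dots> = K' * word_energy R x0 W a S fs' g"
      by (simp add: K'_def energy algebra_simps)
    finally show "norm (defect x0 W S g (einv x)) \<le> K' * word_energy R x0 W a S fs' g" .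
    have "norm ((S g' - S g) *v v) = norm ((S g - S g') *v v)"
      by (metis minus_diff_eq norm_minus_cancel matrix_vector_mult_diff_rdistrib)
    also have "\<dots> \<le> K * norm v * ?e" using step(2)[of S v W a] .
    also have "\<dots> \<le> K' * norm v * word_energy R x0 W a S fs' g"
      using e K by (simp add: K'_def energy c_def algebra_simps)
    finally show "norm ((S (emul g (einv x)) - S g) *v v) \<le> K' * norm v * word_energy R x0 W a S fs' g"
      by (simp add: g'_def)
  qed
  moreover have "K' \<ge> 0" using K by (simp add: K'_def c_def)
  moreover have "set fs' \<subseteq> G"
    using fs einv_closed[OF xG] by (auto simp: fs'_def intro!: emul_closed)
  ultimately show ?thesis unfolding controlled_def by blast
qed

lemma controlled: "x \<in> G \<Longrightarrow> controlled x"
proof -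
  assume "x \<in> G"
  then have "x \<in> generated R'" using generated_R' by simp
  then show ?thesis
  proof (induction x rule: generated.induct)
    case gen_id
    show ?case by (rule controlled_eid)
  next
    case (gen_base r)
    then show ?case by (rule controlled_generator)
  next
    case (gen_mul x y)
    then show ?case using controlled_emul generated_R' by blast
  next
    case (gen_inv x)
    then show ?case using controlled_einv generated_R' by blast
  qed
qed

lemma controlled_uniformly:
  assumes "finite X" "X \<subseteq> G"
  shows "\<exists>fs K. set fs \<subseteq> G \<and> K \<ge> 0 \<and> (\<forall>x\<in>X. controlled_by fs K x)"
  using assms
proof (induction X rule: finite_induct)
  case empty
  show ?case by (rule exI[of _ "[]"], rule exI[of _ 0]) simp
next
  case (insert x X)
  obtain fs1 K1 where 1: "set fs1 \<subseteq> G" "K1 \<ge> 0" "controlled_by fs1 K1 x"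
    using controlled[of x] insert.prems unfolding controlled_def by auto
  obtain fs2 K2 where 2: "set fs2 \<subseteq> G" "K2 \<ge> 0" "\<forall>x\<in>X. controlled_by fs2 K2 x"
    using insert by auto
  have "controlled_by (fs1 @ fs2) (K1 + K2) x"
    using controlled_by_append[OF 1(3) 1(2)] 2(2) by simp
  moreover have "controlled_by (fs1 @ fs2) (K1 + K2) x'" if "x' \<in> X" for x'
    using controlled_by_append[OF _ 2(2), of fs2 x' "K1 + K2" fs1] 2(3) 1(2) that
    by (simp add: controlled_by_append_commute)
  ultimately have "\<forall>x'\<in>insert x X. controlled_by (fs1 @ fs2) (K1 + K2) x'" by blast
  then show ?case using 1 2 by (intro exI[of _ "fs1 @ fs2"] exI[of _ "K1 + K2"]) auto
qed

end

section \<open>Translations and the skew parts of rigid fits\<close>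

definition translation :: "real^'n::finite \<Rightarrow> 'n euc" where
  "translation b = (mat 1, b)"

lemma translation_emul_commute:
  "emul (translation b) (emul (translation b') c) = emul (translation b') (emul (translation b) c)"
proof -
  have "emul (translation b) (translation b') = emul (translation b') (translation b)"
    by (simp add: translation_def emul_def add.commute)
  then show ?thesis by (metis emul_assoc)
qed

lemma translation_conj:
  assumes "orth g"
  shows "emul g (mat 1, transpose (fst g) *v b) = emul (translation b) g"
proof -
  have "fst g *v (transpose (fst g) *v b) = b"
    using orth_inverse(2)[OF assms] by (metis matrix_vector_mul_assoc matrix_vector_mul_lid)
  then show ?thesis by (simp add: emul_def translation_def add.commute)
qed

lemma eact_translation_emul: "eact (emul (translation b) g) x = eact g x + b"
  by (simp add: eact_emul translation_def eact_def add.commute)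

definition translation_defect :: "('n::finite euc \<Rightarrow> real^'n) \<Rightarrow> ('n euc \<Rightarrow> real^'n^'n) \<Rightarrow>
    real^'n \<Rightarrow> 'n euc \<Rightarrow> real^'n" where
  "translation_defect W S b g = W (emul (translation b) g) - W g - S g *v b"

lemma translation_defect_eq_defect:
  "orth g \<Longrightarrow> translation_defect W S b g = defect x0 W S g (mat 1, transpose (fst g) *v b)"
  unfolding translation_defect_def defect_def by (simp only: translation_conj eact_translation_emul) simp

lemma real_cross_term_bound:
  fixes \<sigma> r1 r2 :: real
  shows "\<sigma>\<^sup>2 / 2 \<le> - ((\<sigma> + r1) * (- \<sigma> + r2)) + 3/2 * (r1\<^sup>2 + r2\<^sup>2)"
proof -
  have "- ((\<sigma> + r1) * (- \<sigma> + r2)) + 3/2 * (r1\<^sup>2 + r2\<^sup>2) - \<sigma>\<^sup>2 / 2 = (\<sigma> + r1 - r2)\<^sup>2 / 2 + r1\<^sup>2 + r2\<^sup>2"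
    by (simp add: power2_eq_square field_simps)
  moreover have "(\<sigma> + r1 - r2)\<^sup>2 / 2 + r1\<^sup>2 + r2\<^sup>2 \<ge> 0" by simp
  ultimately show ?thesis by linarith
qed

lemma inner_square_le:
  assumes "(norm y)\<^sup>2 \<le> \<beta>"
  shows "(inner x y)\<^sup>2 \<le> (norm x)\<^sup>2 * \<beta>"
proof -
  have "(inner x y)\<^sup>2 \<le> (norm x * norm y)\<^sup>2"
    by (metis Cauchy_Schwarz_ineq2 abs_ge_zero power2_abs power_mono)
  also have "\<dots> \<le> (norm x)\<^sup>2 * \<beta>"
    using assms by (simp add: power_mult_distrib mult_left_mono)
  finally show ?thesis .
qed

lemma inner_defects_bound:
  assumes "(norm b)\<^sup>2 \<le> \<beta>" "(norm b')\<^sup>2 \<le> \<beta>"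
  shows "((inner d' b')\<^sup>2 + (inner d b)\<^sup>2) / 2 + 3/2 * ((inner d b')\<^sup>2 + (inner d' b)\<^sup>2)
    \<le> 2 * \<beta> * ((norm d)\<^sup>2 + (norm d')\<^sup>2)"
proof -
  have "((inner d' b')\<^sup>2 + (inner d b)\<^sup>2) / 2 + 3/2 * ((inner d b')\<^sup>2 + (inner d' b)\<^sup>2) \<le>
      ((norm d')\<^sup>2 * \<beta> + (norm d)\<^sup>2 * \<beta>) / 2 + 3/2 * ((norm d)\<^sup>2 * \<beta> + (norm d')\<^sup>2 * \<beta>)"
    by (intro add_mono divide_right_mono mult_left_mono inner_square_le assms) auto
  then show ?thesis by (simp add: field_simps)
qed

lemma sum_diff_mult_diff:
  "(\<Sum>c\<in>C. ((a c::real) - b c) * (x c - y c)) =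
    (\<Sum>c\<in>C. a c * x c) - (\<Sum>c\<in>C. a c * y c) - (\<Sum>c\<in>C. b c * x c) + (\<Sum>c\<in>C. b c * y c)"
  by (simp add: algebra_simps sum.distrib sum_subtractf)

context periodic_cells
begin

text \<open>Discrete summation by parts: translations commute, so the two difference operators
  can be exchanged under the cell sum.\<close>

lemma sum_translation_differences_swap:
  fixes wj wi :: "'n euc \<Rightarrow> real"
  assumes t: "translation b \<in> G" and t': "translation b' \<in> G"
    and pj: "cell_periodic G N wj" and pi: "cell_periodic G N wi"
  defines "T \<equiv> emul (translation b)" and "T' \<equiv> emul (translation b')"
  shows "(\<Sum>c\<in>C. (wj (T c) - wj c) * (wi (T' c) - wi c)) =
         (\<Sum>c\<in>C. (wj (T' (T c)) - wj (T c)) * (wi (T (T' c)) - wi (T' c)))"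
proof -
  have TT': "T (T' c) = T' (T c)" for c
    unfolding T_def T'_def by (rule translation_emul_commute)
  have T'T: "T' (T c) = emul (emul (translation b') (translation b)) c" for c
    unfolding T_def T'_def by (simp add: emul_assoc)
  have periodic: "cell_periodic G N (\<lambda>d. wj d * wi d)" "cell_periodic G N (\<lambda>d. wj (T d) * wi d)"
      "cell_periodic G N (\<lambda>d. wj d * wi (T' d))"
    using pj pi t t' unfolding cell_periodic_def T_def T'_def
    by (simp_all add: emul_assoc[symmetric] emul_closed)
  have "emul (translation b') (translation b) \<in> G" using emul_closed[OF t' t] .
  then have 1: "(\<Sum>c\<in>C. wj (T' (T c)) * wi (T (T' c))) = (\<Sum>c\<in>C. wj c * wi c)"
    using sum_emul_left[OF _ periodic(1)] by (simp add: TT' T'T)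
  have 2: "(\<Sum>c\<in>C. wj (T' (T c)) * wi (T' c)) = (\<Sum>c\<in>C. wj (T c) * wi c)"
    using sum_emul_left[OF t' periodic(2)] unfolding T'_def[symmetric] by (simp add: TT')
  have 3: "(\<Sum>c\<in>C. wj (T c) * wi (T (T' c))) = (\<Sum>c\<in>C. wj c * wi (T' c))"
    using sum_emul_left[OF t periodic(3)] unfolding T_def[symmetric] by (simp add: TT')
  show ?thesis
    unfolding sum_diff_mult_diff 1 2 3 by simp
qed

lemma neg_sum_shifted_products_le:
  fixes p q :: "'n euc \<Rightarrow> real"
  assumes y: "y \<in> G" and z: "z \<in> G" and p: "cell_periodic G N p" and q: "cell_periodic G N q"
  shows "- (\<Sum>c\<in>C. p (emul y c) * q (emul z c)) \<le> (\<Sum>c\<in>C. (p c)\<^sup>2 + (q c)\<^sup>2) / 2"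
proof -
  have "- (\<Sum>c\<in>C. p (emul y c) * q (emul z c)) \<le> (\<Sum>c\<in>C. ((p (emul y c))\<^sup>2 + (q (emul z c))\<^sup>2) / 2)"
  proof -
    have "- (s * t) \<le> (s\<^sup>2 + t\<^sup>2) / 2" for s t :: real
      using sum_squares_bound[of "- s" t] by (simp add: power2_eq_square)
    then show ?thesis
      unfolding sum_negf[symmetric] by (intro sum_mono)
  qed
  also have "\<dots> = (\<Sum>c\<in>C. (p c)\<^sup>2 + (q c)\<^sup>2) / 2"
    using sum_emul_left[OF y, of "\<lambda>c. (p c)\<^sup>2"] sum_emul_left[OF z, of "\<lambda>c. (q c)\<^sup>2"] p q
    by (simp add: cell_periodic_def sum_divide_distrib[symmetric] sum.distrib)
  finally show ?thesis .
qed

lemma cell_periodic_translation_defect: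
  assumes "translation b \<in> G" "cell_periodic G N W" "cell_periodic G N S"
  shows "cell_periodic G N (translation_defect W S b)"
  using assms unfolding cell_periodic_def translation_defect_def
  by (simp add: emul_assoc[symmetric] emul_closed)

text \<open>The entry \<open>S b \<bullet> b'\<close> is the common part of the differences of \<open>W \<bullet> b'\<close> along \<open>b\<close> and of
  \<open>W \<bullet> b\<close> along \<open>b'\<close>, with opposite signs by skewness; summation by parts turns the product of
  these differences into one of pure translation defects.\<close>

lemma sum_skew_entry_cross_term:
  assumes t: "translation b \<in> G" and t': "translation b' \<in> G"
    and W: "cell_periodic G N W" and S: "cell_periodic G N S" and skew: "\<And>g. g \<in> G \<Longrightarrow> skew (S g)"
  defines "\<delta> \<equiv> translation_defect W S b" and "\<delta>' \<equiv> translation_defect W S b'"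
  shows "(\<Sum>c\<in>C. (inner (S c *v b) b' + inner (\<delta> c) b') * (- inner (S c *v b) b' + inner (\<delta>' c) b)) =
    (\<Sum>c\<in>C. inner (\<delta>' (emul (translation b) c)) b' * inner (\<delta> (emul (translation b') c)) b)"
proof -
  let ?T = "emul (translation b)" and ?T' = "emul (translation b')"
  define wj where "wj g = inner (W g) b'" for g
  define wi where "wi g = inner (W g) b" for g
  have diff_wj: "wj (?T c) - wj c = inner (S c *v b) b' + inner (\<delta> c) b'"
    and diff_wj': "c \<in> G \<Longrightarrow> wj (?T' c) - wj c = inner (\<delta>' c) b'"
    and diff_wi: "c \<in> G \<Longrightarrow> wi (?T' c) - wi c = - inner (S c *v b) b' + inner (\<delta>' c) b"
    and diff_wi': "c \<in> G \<Longrightarrow> wi (?T c) - wi c = inner (\<delta> c) b" for c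
    using skew_inner[OF skew, of c b' b] skew_inner_self[OF skew, of c b'] skew_inner_self[OF skew, of c b]
    by (simp_all add: wj_def wi_def \<delta>_def \<delta>'_def translation_defect_def inner_diff_left inner_add_left)
  have "cell_periodic G N wj" "cell_periodic G N wi"
    using W by (auto simp: cell_periodic_def wj_def wi_def)
  note swap = sum_translation_differences_swap[OF t t' this]
  have "(\<Sum>c\<in>C. (inner (S c *v b) b' + inner (\<delta> c) b') * (- inner (S c *v b) b' + inner (\<delta>' c) b)) =
      (\<Sum>c\<in>C. (wj (?T c) - wj c) * (wi (?T' c) - wi c))"
    using C_subset by (intro sum.cong) (auto simp: diff_wj diff_wi)
  also have "\<dots> = (\<Sum>c\<in>C. (wj (?T' (?T c)) - wj (?T c)) * (wi (?T (?T' c)) - wi (?T' c)))"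
    by (rule swap)
  also have "\<dots> = (\<Sum>c\<in>C. inner (\<delta>' (?T c)) b' * inner (\<delta> (?T' c)) b)"
    using C_subset emul_closed[OF t] emul_closed[OF t'] by (intro sum.cong) (auto simp: diff_wj' diff_wi')
  finally show ?thesis .
qed

lemma sum_skew_entry_squared_le:
  assumes t: "translation b \<in> G" and t': "translation b' \<in> G"
    and W: "cell_periodic G N W" and S: "cell_periodic G N S" and skew: "\<And>g. g \<in> G \<Longrightarrow> skew (S g)"
    and \<beta>: "(norm b)\<^sup>2 \<le> \<beta>" "(norm b')\<^sup>2 \<le> \<beta>"
  shows "(\<Sum>c\<in>C. (inner (S c *v b) b')\<^sup>2) \<le>
    4 * \<beta> * (\<Sum>c\<in>C. (norm (translation_defect W S b c))\<^sup>2 + (norm (translation_defect W S b' c))\<^sup>2)"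
proof -
  let ?\<delta> = "translation_defect W S b" and ?\<delta>' = "translation_defect W S b'"
  define \<sigma> where "\<sigma> c = inner (S c *v b) b'" for c
  define \<rho>1 where "\<rho>1 c = inner (?\<delta> c) b'" for c
  define \<rho>2 where "\<rho>2 c = inner (?\<delta>' c) b" for c
  define P where "P c = inner (?\<delta>' c) b'" for c
  define P' where "P' c = inner (?\<delta> c) b" for c
  have "cell_periodic G N P" "cell_periodic G N P'"
    using cell_periodic_translation_defect[OF t W S] cell_periodic_translation_defect[OF t' W S]
    by (auto simp: cell_periodic_def P_def P'_def)
  then have cross: "- (\<Sum>c\<in>C. (\<sigma> c + \<rho>1 c) * (- \<sigma> c + \<rho>2 c)) \<le> (\<Sum>c\<in>C. (P c)\<^sup>2 + (P' c)\<^sup>2) / 2"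
    using neg_sum_shifted_products_le[OF t t'] sum_skew_entry_cross_term[OF t t' W S skew]
    unfolding \<sigma>_def \<rho>1_def \<rho>2_def P_def P'_def by simp
  have "(\<Sum>c\<in>C. (\<sigma> c)\<^sup>2) / 2 \<le> (\<Sum>c\<in>C. - ((\<sigma> c + \<rho>1 c) * (- \<sigma> c + \<rho>2 c)) + 3/2 * ((\<rho>1 c)\<^sup>2 + (\<rho>2 c)\<^sup>2))"
    unfolding sum_divide_distrib by (intro sum_mono real_cross_term_bound)
  also have "\<dots> = - (\<Sum>c\<in>C. (\<sigma> c + \<rho>1 c) * (- \<sigma> c + \<rho>2 c))
      + (\<Sum>c\<in>C. 3/2 * ((\<rho>1 c)\<^sup>2 + (\<rho>2 c)\<^sup>2))"
    by (simp only: sum.distrib sum_negf)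
  also have "\<dots> \<le> (\<Sum>c\<in>C. (P c)\<^sup>2 + (P' c)\<^sup>2) / 2 + (\<Sum>c\<in>C. 3/2 * ((\<rho>1 c)\<^sup>2 + (\<rho>2 c)\<^sup>2))"
    using cross by linarith
  also have "\<dots> = (\<Sum>c\<in>C. ((P c)\<^sup>2 + (P' c)\<^sup>2) / 2 + 3/2 * ((\<rho>1 c)\<^sup>2 + (\<rho>2 c)\<^sup>2))"
    by (simp only: sum.distrib sum_divide_distrib[symmetric])
  also have "\<dots> \<le> (\<Sum>c\<in>C. 2 * \<beta> * ((norm (?\<delta> c))\<^sup>2 + (norm (?\<delta>' c))\<^sup>2))"
    unfolding P_def P'_def \<rho>1_def \<rho>2_def by (intro sum_mono inner_defects_bound \<beta>)
  finally show ?thesis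
    by (simp add: \<sigma>_def sum_distrib_left[symmetric])
qed

lemma cell_periodic_local_energy:
  assumes R: "R \<subseteq> G" and W: "cell_periodic G N W" and a: "cell_periodic G N a"
    and S: "cell_periodic G N S"
  shows "cell_periodic G N (local_energy R x0 W a S)"
  unfolding cell_periodic_def
proof (intro ballI)
  fix g t assume g: "g \<in> G" and t: "t \<in> H"
  have "residual x0 W a S (emul g t) h = residual x0 W a S g h" if h: "h \<in> R" for h
  proof -
    have hG: "h \<in> G" using h R by blast
    define t' where "t' = emul (emul (einv h) t) h"
    have t': "t' \<in> H" using H_conj[OF einv_closed[OF hG] t] orth[OF hG] by (simp add: t'_def)
    have "emul (emul g h) t' = emul (emul g t) h" using orth[OF hG] by (simp add: t'_def emul_assoc)
    then have "W (emul (emul g t) h) = W (emul g h)"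
      using W emul_closed[OF g hG] t' unfolding cell_periodic_def by metis
    moreover have "eact (emul (emul g t) h) x0 - eact (emul g t) x0 = eact (emul g h) x0 - eact g x0"
      by (simp add: eact_emul eact_diff fst_TN[OF t])
    moreover have "a (emul g t) = a g" "S (emul g t) = S g"
      using a S g t unfolding cell_periodic_def by auto
    ultimately show ?thesis by (simp add: residual_def)
  qed
  then show "local_energy R x0 W a S (emul g t) = local_energy R x0 W a S g"
    by (simp add: local_energy_def)
qed

lemma sum_word_energy_squared_le:
  assumes fs: "set fs \<subseteq> G" and E: "cell_periodic G N (local_energy R x0 W a S)"
  shows "(\<Sum>c\<in>C. (word_energy R x0 W a S fs c)\<^sup>2) \<le>
    (real (length fs))\<^sup>2 * (\<Sum>c\<in>C. local_energy R x0 W a S c)"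
proof -
  let ?E = "local_energy R x0 W a S"
  have "(\<Sum>c\<in>C. (word_energy R x0 W a S fs c)\<^sup>2) \<le>
      (\<Sum>c\<in>C. real (length fs) * sum_list (map (\<lambda>f. ?E (emul c f)) fs))"
    unfolding word_energy_def
    by (intro sum_mono order_trans[OF sum_list_squared_le]) (simp add: comp_def)
  also have "\<dots> = real (length fs) * sum_list (map (\<lambda>f. \<Sum>c\<in>C. ?E (emul c f)) fs)"
    by (simp add: sum_distrib_left[symmetric], induction fs) (auto simp: sum.distrib)
  also have "\<dots> = real (length fs) * sum_list (map (\<lambda>f. \<Sum>c\<in>C. ?E c) fs)"
    using fs by (intro arg_cong[where f="\<lambda>s. _ * sum_list s"] map_cong refl sum_emul_right[OF _ E]) auto
  finally show ?thesis by (simp add: sum_list_triv power2_eq_square)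
qed

lemma sum_skew_entries_squared_le:
  assumes B: "finite B" "\<And>b. b \<in> B \<Longrightarrow> translation b \<in> G" "\<And>b. b \<in> B \<Longrightarrow> (norm b)\<^sup>2 \<le> \<beta>"
    and W: "cell_periodic G N W" and S: "cell_periodic G N S" and skew: "\<And>g. g \<in> G \<Longrightarrow> skew (S g)"
  shows "(\<Sum>c\<in>C. (\<Sum>(b, b')\<in>B \<times> B. \<bar>inner (S c *v b) b'\<bar>)\<^sup>2) \<le>
    8 * \<beta> * real (card B) ^ 3 * (\<Sum>b\<in>B. \<Sum>c\<in>C. (norm (translation_defect W S b c))\<^sup>2)"
proof -
  let ?D = "\<lambda>b. \<Sum>c\<in>C. (norm (translation_defect W S b c))\<^sup>2"
  have \<beta>: "\<beta> \<ge> 0" if "B \<noteq> {}" using B(3) that by (meson all_not_in_conv order_trans zero_le_power2)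
  have "(\<Sum>c\<in>C. (\<Sum>(b, b')\<in>B \<times> B. \<bar>inner (S c *v b) b'\<bar>)\<^sup>2) \<le>
      (\<Sum>c\<in>C. real (card B) ^ 2 * (\<Sum>(b, b')\<in>B \<times> B. (inner (S c *v b) b')\<^sup>2))"
    using sum_squared_le_sum_of_squares[of "\<lambda>(b, b'). \<bar>inner (S _ *v b) b'\<bar>" "B \<times> B"]
    by (intro sum_mono) (simp add: card_cartesian_product case_prod_beta power2_eq_square mult_ac)
  also have "\<dots> = real (card B) ^ 2 * (\<Sum>(b, b')\<in>B \<times> B. \<Sum>c\<in>C. (inner (S c *v b) b')\<^sup>2)"
    by (simp add: sum_distrib_left sum.swap[of _ C] case_prod_beta)
  also have "\<dots> \<le> real (card B) ^ 2 * (\<Sum>(b, b')\<in>B \<times> B. 4 * \<beta> * (?D b + ?D b'))"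
    using sum_skew_entry_squared_le[OF B(2) B(2) W S skew B(3) B(3)]
    by (intro mult_left_mono sum_mono) (auto simp: sum.distrib)
  also have "(\<Sum>(b, b')\<in>B \<times> B. 4 * \<beta> * (?D b + ?D b')) = 4 * \<beta> * (2 * real (card B) * (\<Sum>b\<in>B. ?D b))"
    by (simp add: sum.cartesian_product[symmetric] sum.distrib sum_distrib_left[symmetric]
        sum.swap[of "\<lambda>b b'. ?D b'"])
  also have "real (card B) ^ 2 * (4 * \<beta> * (2 * real (card B) * (\<Sum>b\<in>B. ?D b)))
      = 8 * \<beta> * real (card B) ^ 3 * (\<Sum>b\<in>B. ?D b)"
    by (simp add: power2_eq_square power3_eq_cube)
  finally show ?thesis .
qed

end

section \<open>Distances to infinitesimal rigid motions\<close>

lemma distR_bdd_below: "bdd_below {sqrt (\<Sum>h\<in>R. (norm (v h - w h))\<^sup>2) | w. w \<in> U}"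
  by (rule bdd_belowI[of _ 0]) (force intro!: sum_nonneg)

lemma distR_le: "w \<in> U \<Longrightarrow> distR R v U \<le> sqrt (\<Sum>h\<in>R. (norm (v h - w h))\<^sup>2)"
  unfolding distR_def by (rule cInf_lower[OF _ distR_bdd_below]) blast

lemma distR_greatest:
  "U \<noteq> {} \<Longrightarrow> (\<And>w. w \<in> U \<Longrightarrow> d \<le> sqrt (\<Sum>h\<in>R. (norm (v h - w h))\<^sup>2)) \<Longrightarrow> d \<le> distR R v U"
  unfolding distR_def by (rule cInf_greatest) auto

lemma distR_nonneg: "U \<noteq> {} \<Longrightarrow> 0 \<le> distR R v U"
  by (rule distR_greatest) (auto intro: sum_nonneg)

lemma distR_antimono: "U \<subseteq> U' \<Longrightarrow> U \<noteq> {} \<Longrightarrow> distR R v U' \<le> distR R v U"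
  by (rule distR_greatest) (auto intro: distR_le)

lemma distR_approx:
  assumes U: "U \<noteq> {}" and e: "e > 0"
  shows "\<exists>w\<in>U. (\<Sum>h\<in>R. (norm (v h - w h))\<^sup>2) < (distR R v U)\<^sup>2 + e"
proof (rule ccontr)
  let ?d = "distR R v U"
  assume "\<not> ?thesis"
  then have "sqrt (?d\<^sup>2 + e) \<le> ?d"
    by (intro distR_greatest[OF U]) (auto simp: not_less)
  moreover have "?d < sqrt (?d\<^sup>2 + e)"
    using distR_nonneg[OF U] e by (simp add: real_less_rsqrt)
  ultimately show False by simp
qed

lemma zero_in_Uiso00: "(\<lambda>_. 0) \<in> Uiso00 x0 R"
  unfolding Uiso00_def by auto

lemma Uiso00_subset_Uiso: "Uiso00 x0 R \<subseteq> Uiso x0 R"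
proof
  fix v assume "v \<in> Uiso00 x0 R"
  then obtain a where "\<forall>g\<in>R. rot g *v v g = a" unfolding Uiso00_def by blast
  moreover have "skew (0::real^'n^'n)" by (simp add: skew_def vec_eq_iff transpose_def)
  moreover have "(0::real^'n^'n) *v y = 0" for y by (simp add: vec_eq_iff matrix_vector_mult_def)
  ultimately show "v \<in> Uiso x0 R" unfolding Uiso_def by force
qed

lemma Uiso_nonempty: "Uiso x0 R \<noteq> {}"
  using zero_in_Uiso00 Uiso00_subset_Uiso by blast

lemma sqrt_scaled_le:
  assumes "(K::real) \<ge> 0" "c \<ge> 0" "A \<le> K\<^sup>2 * B"
  shows "sqrt (c * A) \<le> K * sqrt (c * B)"
proof -
  have "c * A \<le> K\<^sup>2 * (c * B)" using mult_left_mono[OF assms(3,2)] by (simp add: mult_ac)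
  then have "sqrt (c * A) \<le> sqrt (K\<^sup>2 * (c * B))" by simp
  also have "\<dots> = K * sqrt (c * B)" using assms(1) by (simp add: real_sqrt_mult)
  finally show ?thesis .
qed

lemma normR_le_normR00: "normR x0 R C u \<le> normR00 x0 R C u"
proof -
  have "(\<Sum>g\<in>C. (distR R (\<lambda>h. u (emul g h)) (Uiso x0 R))\<^sup>2) \<le> (\<Sum>g\<in>C. (distR R (\<lambda>h. u (emul g h)) (Uiso00 x0 R))\<^sup>2)"
    using Uiso00_subset_Uiso[of x0 R] zero_in_Uiso00[of x0 R] Uiso_nonempty[of x0 R]
    by (intro sum_mono power_mono distR_antimono distR_nonneg) blast+
  then show ?thesis unfolding normR_def normR00_def using sqrt_scaled_le[of 1 "1 / real (card C)"] by simp
qed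

lemma orth_rot_transpose:
  assumes "orth h"
  shows "rot h *v (transpose (rot h) *v y) = y" "transpose (rot h) *v (rot h *v y) = y"
  using orth_inverse[OF assms] unfolding rot_def
  by (metis matrix_vector_mul_assoc matrix_vector_mul_lid)+

lemma normR00_le_gradR:
  assumes R: "\<And>h. h \<in> R \<Longrightarrow> orth h"
  shows "normR00 x0 R C u \<le> gradR R C u"
proof -
  have "(distR R (\<lambda>h. u (emul g h)) (Uiso00 x0 R))\<^sup>2 \<le> (\<Sum>h\<in>R. (norm (u (emul g h) - transpose (rot h) *v u g))\<^sup>2)"
    for g
  proof -
    have "(\<lambda>h. transpose (rot h) *v u g) \<in> Uiso00 x0 R"
      unfolding Uiso00_def using R orth_rot_transpose by blast
    then have "distR R (\<lambda>h. u (emul g h)) (Uiso00 x0 R) \<le> sqrt (\<Sum>h\<in>R. (norm (u (emul g h) - transpose (rot h) *v u g))\<^sup>2)"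
      by (rule distR_le)
    moreover have "0 \<le> distR R (\<lambda>h. u (emul g h)) (Uiso00 x0 R)"
      using zero_in_Uiso00 by (intro distR_nonneg) blast
    ultimately have "(distR R (\<lambda>h. u (emul g h)) (Uiso00 x0 R))\<^sup>2 \<le>
        (sqrt (\<Sum>h\<in>R. (norm (u (emul g h) - transpose (rot h) *v u g))\<^sup>2))\<^sup>2"
      by (rule power_mono)
    then show ?thesis by (simp add: sum_nonneg)
  qed
  then show ?thesis unfolding normR00_def gradR_def
    using sqrt_scaled_le[of 1 "1 / real (card C)"] by (simp add: sum_mono)
qed

lemma sum_gradient_le_fit00:
  assumes R: "\<And>h. h \<in> R \<Longrightarrow> orth h" and eid: "eid \<in> R" and fin: "finite R"
    and w: "w \<in> Uiso00 x0 R"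
  shows "(\<Sum>h\<in>R. (norm (v h - transpose (rot h) *v v eid))\<^sup>2) \<le>
    2 * (1 + real (card R)) * (\<Sum>h\<in>R. (norm (v h - w h))\<^sup>2)"
proof -
  obtain a where a: "\<And>h. h \<in> R \<Longrightarrow> rot h *v w h = a" using w unfolding Uiso00_def by blast
  let ?T = "\<Sum>h\<in>R. (norm (v h - w h))\<^sup>2"
  have w_eq: "w h = transpose (rot h) *v a" if "h \<in> R" for h
    using orth_rot_transpose(2)[OF R[OF that]] a[OF that] by metis
  have "w eid = a" using w_eq[OF eid] by (simp add: rot_def eid_def)
  then have "(norm (a - v eid))\<^sup>2 = (norm (v eid - w eid))\<^sup>2"
    by (simp add: norm_minus_commute)
  also have "\<dots> \<le> ?T"
    using eid fin by (intro member_le_sum) auto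
  finally have a_v: "(norm (a - v eid))\<^sup>2 \<le> ?T" .
  have "(norm (v h - transpose (rot h) *v v eid))\<^sup>2 \<le> 2 * (norm (v h - w h))\<^sup>2 + 2 * ?T"
    if h: "h \<in> R" for h
  proof -
    have eq: "v h - transpose (rot h) *v v eid = (v h - w h) + transpose (rot h) *v (a - v eid)"
      by (simp add: w_eq[OF h] matrix_vector_mult_diff_distrib)
    have "norm (transpose (rot h) *v (a - v eid)) = norm (a - v eid)"
      using R[OF h] orthogonal_matrix_transpose norm_orthogonal_matrix_vector
      unfolding orth_def rot_def by blast
    then have "norm (v h - transpose (rot h) *v v eid) \<le> norm (v h - w h) + norm (a - v eid)"
      unfolding eq using norm_triangle_ineq[of "v h - w h" "transpose (rot h) *v (a - v eid)"]
      by linarith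
    then have "(norm (v h - transpose (rot h) *v v eid))\<^sup>2 \<le> (norm (v h - w h) + norm (a - v eid))\<^sup>2"
      by (intro power_mono) auto
    also have "\<dots> \<le> 2 * (norm (v h - w h))\<^sup>2 + 2 * (norm (a - v eid))\<^sup>2"
      using sum_squares_bound[of "norm (v h - w h)" "norm (a - v eid)"] by (simp only: power2_sum)
    finally show ?thesis using a_v by linarith
  qed
  then have "(\<Sum>h\<in>R. (norm (v h - transpose (rot h) *v v eid))\<^sup>2) \<le>
      (\<Sum>h\<in>R. 2 * (norm (v h - w h))\<^sup>2 + 2 * ?T)"
    by (rule sum_mono)
  also have "\<dots> = 2 * (1 + real (card R)) * ?T"
    by (simp add: sum.distrib sum_distrib_left algebra_simps)
  finally show ?thesis .
qed

lemma sum_gradient_le_dist00: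
  assumes R: "\<And>h. h \<in> R \<Longrightarrow> orth h" and eid: "eid \<in> R" and fin: "finite R"
  shows "(\<Sum>h\<in>R. (norm (v h - transpose (rot h) *v v eid))\<^sup>2) \<le>
    2 * (1 + real (card R)) * (distR R v (Uiso00 x0 R))\<^sup>2"
proof -
  let ?k = "2 * (1 + real (card R))" and ?G = "\<Sum>h\<in>R. (norm (v h - transpose (rot h) *v v eid))\<^sup>2"
  have k: "?k > 0" by simp
  have "sqrt (?G / ?k) \<le> distR R v (Uiso00 x0 R)"
  proof (rule distR_greatest)
    fix w assume "w \<in> Uiso00 x0 R"
    from sum_gradient_le_fit00[OF R eid fin this] k
    show "sqrt (?G / ?k) \<le> sqrt (\<Sum>h\<in>R. (norm (v h - w h))\<^sup>2)"
      by (simp add: divide_le_eq mult.commute)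
  qed (use zero_in_Uiso00 in blast)
  moreover have "?G / ?k \<ge> 0" by (simp add: sum_nonneg)
  ultimately have "(sqrt (?G / ?k))\<^sup>2 \<le> (distR R v (Uiso00 x0 R))\<^sup>2"
    by (intro power_mono) auto
  with \<open>?G / ?k \<ge> 0\<close> show ?thesis using k by (simp add: divide_le_eq mult.commute)
qed

lemma gradR_le_normR00:
  assumes R: "\<And>h. h \<in> R \<Longrightarrow> orth h" and eid: "eid \<in> R" and fin: "finite R"
  shows "gradR R C u \<le> sqrt (2 * (1 + real (card R))) * normR00 x0 R C u"
proof -
  have "(\<Sum>g\<in>C. \<Sum>h\<in>R. (norm (u (emul g h) - transpose (rot h) *v u g))\<^sup>2) \<le>
      (sqrt (2 * (1 + real (card R))))\<^sup>2 * (\<Sum>g\<in>C. (distR R (\<lambda>h. u (emul g h)) (Uiso00 x0 R))\<^sup>2)"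
    using sum_gradient_le_dist00[OF R eid fin, of "\<lambda>h. u (emul _ h)"]
    by (simp add: sum_distrib_left sum_mono)
  then show ?thesis unfolding gradR_def normR00_def by (intro sqrt_scaled_le) auto
qed

lemma norm_W_diff_in_frame:
  assumes c: "orth c" and h: "orth h"
  shows "norm (fst (emul c h) *v y - fst c *v x) = norm (y - transpose (rot h) *v x)"
proof -
  have "fst (emul c h) *v (transpose (rot h) *v x) = fst c *v x"
    using orth_rot_transpose(1)[OF h] by (simp add: rot_def matrix_vector_mul_assoc[symmetric])
  then have "fst (emul c h) *v (y - transpose (rot h) *v x) = fst (emul c h) *v y - fst c *v x"
    by (simp add: matrix_vector_mult_diff_distrib)
  then show ?thesis
    using orth_emul[OF c h] by (metis orth_def norm_orthogonal_matrix_vector)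
qed

lemma norm_residual_in_frame:
  assumes c: "orth c" and h: "orth h"
    and a: "a c = fst c *v a0" and S: "S c = fst c ** S0 ** transpose (fst c)"
  shows "norm (residual x0 (\<lambda>g. fst g *v u g) a S c h) =
    norm (rot h *v u (emul c h) - a0 - S0 *v (eact h x0 - x0))"
proof -
  have "S c *v (fst c *v z) = fst c *v (S0 *v z)" for z
    by (simp add: S matrix_vector_mul_assoc orth_inverse(1)[OF c] flip: matrix_mul_assoc)
  then have "S c *v (eact (emul c h) x0 - eact c x0) = fst c *v (S0 *v (eact h x0 - x0))"
    by (simp add: eact_emul eact_diff)
  then have "residual x0 (\<lambda>g. fst g *v u g) a S c h = fst c *v (rot h *v u (emul c h) - a0 - S0 *v (eact h x0 - x0))"
    by (simp add: residual_def a rot_def matrix_vector_mul_assoc matrix_vector_mult_diff_distrib)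
  then show ?thesis
    using c by (simp add: orth_def norm_orthogonal_matrix_vector)
qed

lemma exists_near_rigid_fit:
  assumes R: "\<And>h. h \<in> R \<Longrightarrow> orth h" and e: "e > 0"
  shows "\<exists>a S. skew S \<and>
    (\<Sum>h\<in>R. (norm (rot h *v v h - a - S *v (eact h x0 - x0)))\<^sup>2) < (distR R v (Uiso x0 R))\<^sup>2 + e"
proof -
  obtain w where w: "w \<in> Uiso x0 R" and near: "(\<Sum>h\<in>R. (norm (v h - w h))\<^sup>2) < (distR R v (Uiso x0 R))\<^sup>2 + e"
    using distR_approx[OF Uiso_nonempty e] by blast
  obtain a S where S: "skew S" and fit: "\<And>h. h \<in> R \<Longrightarrow> rot h *v w h = a + S *v (eact h x0 - x0)"
    using w unfolding Uiso_def by blast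
  have "norm (rot h *v v h - a - S *v (eact h x0 - x0)) = norm (v h - w h)" if h: "h \<in> R" for h
  proof -
    have "rot h *v v h - a - S *v (eact h x0 - x0) = rot h *v (v h - w h)"
      by (simp add: fit[OF h] matrix_vector_mult_diff_distrib)
    then show ?thesis
      using R[OF h] by (simp add: orth_def rot_def norm_orthogonal_matrix_vector)
  qed
  then show ?thesis using S near by (intro exI[of _ a] exI[of _ S]) simp
qed

lemma (in periodic_cells) sum_gradient_in_frame:
  assumes R: "R \<subseteq> G"
  shows "(\<Sum>c\<in>C. \<Sum>h\<in>R. (norm (u (emul c h) - transpose (rot h) *v u c))\<^sup>2) =
    (\<Sum>c\<in>C. \<Sum>h\<in>R. (norm (fst (emul c h) *v u (emul c h) - fst c *v u c))\<^sup>2)"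
proof (intro sum.cong refl)
  fix c h assume "c \<in> C" "h \<in> R"
  then have "orth c" "orth h" using C_subset R orth by blast+
  then show "(norm (u (emul c h) - transpose (rot h) *v u c))\<^sup>2 =
      (norm (fst (emul c h) *v u (emul c h) - fst c *v u c))\<^sup>2"
    by (simp only: norm_W_diff_in_frame)
qed

lemma (in periodic_cells) sum_local_energy_in_frame:
  assumes R: "R \<subseteq> G"
  shows "(\<Sum>c\<in>C. local_energy R x0 (\<lambda>g. fst g *v u g) (\<lambda>g. fst (rep g) *v a (rep g))
      (\<lambda>g. fst (rep g) ** S (rep g) ** transpose (fst (rep g))) c) =
    (\<Sum>c\<in>C. \<Sum>h\<in>R. (norm (rot h *v u (emul c h) - a c - S c *v (eact h x0 - x0)))\<^sup>2)"
  unfolding local_energy_def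
proof (intro sum.cong refl)
  fix c h assume c: "c \<in> C" and h: "h \<in> R"
  let ?\<alpha> = "\<lambda>g. fst (rep g) *v a (rep g)" and ?\<Sigma> = "\<lambda>g. fst (rep g) ** S (rep g) ** transpose (fst (rep g))"
  have "orth c" "orth h" using c h C_subset R orth by blast+
  moreover have "?\<alpha> c = fst c *v a c" "?\<Sigma> c = fst c ** S c ** transpose (fst c)"
    using rep_of_C[OF c] by simp_all
  ultimately show "(norm (residual x0 (\<lambda>g. fst g *v u g) ?\<alpha> ?\<Sigma> c h))\<^sup>2 =
      (norm (rot h *v u (emul c h) - a c - S c *v (eact h x0 - x0)))\<^sup>2"
    using norm_residual_in_frame[where a="?\<alpha>" and S="?\<Sigma>"] by simp
qed

section \<open>The discrete Korn inequality\<close>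

lemma le_of_forall_pos_le_add_mult:
  fixes x y c :: real
  assumes c: "c \<ge> 0" and le: "\<And>e. e > 0 \<Longrightarrow> x \<le> y + c * e"
  shows "x \<le> y"
proof (rule field_le_epsilon)
  fix e :: real assume e: "e > 0"
  have "x \<le> y + c * (e / (c + 1))" using le[of "e / (c + 1)"] e c by simp
  also have "c * (e / (c + 1)) \<le> e" using c e by (simp add: field_simps)
  finally show "x \<le> y + e" by simp
qed

lemma exists_near_rigid_fits:
  assumes R: "\<And>h. h \<in> R \<Longrightarrow> orth h" and e: "e > 0"
  shows "\<exists>a S. \<forall>c\<in>C. skew (S c) \<and>
    (\<Sum>h\<in>R. (norm (rot h *v v c h - a c - S c *v (eact h x0 - x0)))\<^sup>2) < (distR R (v c) (Uiso x0 R))\<^sup>2 + e"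
proof -
  have "\<forall>c\<in>C. \<exists>aS. skew (snd aS) \<and>
      (\<Sum>h\<in>R. (norm (rot h *v v c h - fst aS - snd aS *v (eact h x0 - x0)))\<^sup>2) < (distR R (v c) (Uiso x0 R))\<^sup>2 + e"
    using exists_near_rigid_fit[OF R e] by fastforce
  then obtain aS where "\<forall>c\<in>C. skew (snd (aS c)) \<and>
      (\<Sum>h\<in>R. (norm (rot h *v v c h - fst (aS c) - snd (aS c) *v (eact h x0 - x0)))\<^sup>2) < (distR R (v c) (Uiso x0 R))\<^sup>2 + e"
    by (rule bchoice[THEN exE]) blast
  then show ?thesis by (intro exI[of _ "\<lambda>c. fst (aS c)"] exI[of _ "\<lambda>c. snd (aS c)"]) simp
qed

locale korn_setting = korn_stencil G R R' R'' x0 for G :: "'n::finite euc set" and R R' R'' x0 +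
  fixes B :: "(real^'n) set"
  assumes finite_B: "finite B" and span_B: "span B = UNIV"
    and translation_B: "\<And>b. b \<in> B \<Longrightarrow> translation b \<in> G"
    and finite_rotations: "finite (fst ` G)" and R_subset: "R \<subseteq> G"
begin

definition conj_translations :: "'n euc set" where
  "conj_translations = (\<lambda>(b, A). (mat 1, transpose A *v b)) ` (B \<times> fst ` G)"

lemma conj_translations_subset: "conj_translations \<subseteq> G"
proof
  fix x assume "x \<in> conj_translations"
  then obtain b A where b: "b \<in> B" and A: "A \<in> fst ` G" and x: "x = (mat 1, transpose A *v b)"
    unfolding conj_translations_def by auto
  then obtain g where g: "g \<in> G" and x: "x = (mat 1, transpose (fst g) *v b)" by blast
  have "emul (einv g) (emul (translation b) g) = emul (einv g) (emul g x)"
    unfolding x translation_conj[OF orth[OF g]] ..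
  also have "\<dots> = x" using orth[OF g] by simp
  finally show "x \<in> G"
    using b g translation_B einv_closed emul_closed by metis
qed

lemma translation_defects_bound:
  "\<exists>Kd\<ge>0. \<forall>N C W a S. periodic_cells G N C \<longrightarrow>
     cell_periodic G N W \<longrightarrow> cell_periodic G N a \<longrightarrow> cell_periodic G N S \<longrightarrow>
     (\<forall>b\<in>B. (\<Sum>c\<in>C. (norm (translation_defect W S b c))\<^sup>2) \<le> Kd * (\<Sum>c\<in>C. local_energy R x0 W a S c))"
proof -
  have "finite conj_translations"
    unfolding conj_translations_def using finite_B finite_rotations by simp
  then obtain fs K where fs: "set fs \<subseteq> G" and K: "K \<ge> 0"
      and ctrl: "\<forall>x\<in>conj_translations. controlled_by fs K x"
    using controlled_uniformly[OF _ conj_translations_subset] by blast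
  have "(\<Sum>c\<in>C. (norm (translation_defect W S b c))\<^sup>2) \<le>
      (K\<^sup>2 * (real (length fs))\<^sup>2) * (\<Sum>c\<in>C. local_energy R x0 W a S c)"
    if cells: "periodic_cells G N C" and W: "cell_periodic G N W" and a: "cell_periodic G N a"
      and S: "cell_periodic G N S" and b: "b \<in> B"
    for N C W a S b
  proof -
    interpret periodic_cells G N C by (rule cells)
    have pointwise: "(norm (translation_defect W S b c))\<^sup>2 \<le> K\<^sup>2 * (word_energy R x0 W a S fs c)\<^sup>2"
      if c: "c \<in> C" for c
    proof -
      have cG: "c \<in> G" using c C_subset by blast
      have "(mat 1, transpose (fst c) *v b) \<in> conj_translations"
        unfolding conj_translations_def using b cG by (intro image_eqI[of _ _ "(b, fst c)"]) auto
      then have "controlled_by fs K (mat 1, transpose (fst c) *v b)"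
        using ctrl by blast
      then have "norm (defect x0 W S c (mat 1, transpose (fst c) *v b)) \<le> K * word_energy R x0 W a S fs c"
        using cG unfolding controlled_by_def by blast
      then have "norm (translation_defect W S b c) \<le> K * word_energy R x0 W a S fs c"
        by (simp only: translation_defect_eq_defect[OF orth[OF cG], of W S b x0])
      then have "(norm (translation_defect W S b c))\<^sup>2 \<le> (K * word_energy R x0 W a S fs c)\<^sup>2"
        by (intro power_mono) auto
      then show ?thesis by (simp add: power_mult_distrib)
    qed
    have "(\<Sum>c\<in>C. (norm (translation_defect W S b c))\<^sup>2) \<le> K\<^sup>2 * (\<Sum>c\<in>C. (word_energy R x0 W a S fs c)\<^sup>2)"
      unfolding sum_distrib_left by (intro sum_mono pointwise)
    also have "\<dots> \<le> K\<^sup>2 * ((real (length fs))\<^sup>2 * (\<Sum>c\<in>C. local_energy R x0 W a S c))"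
      using sum_word_energy_squared_le[OF fs cell_periodic_local_energy[OF R_subset W a S]]
      by (intro mult_left_mono) auto
    finally show ?thesis by (simp add: mult_ac)
  qed
  then show ?thesis using K by (intro exI[of _ "K\<^sup>2 * (real (length fs))\<^sup>2"]) auto
qed

lemma sum_W_diff_squared_le:
  assumes \<kappa>: "\<And>y. norm (S c *v y) \<le> \<kappa> * norm y * \<Psi>" "\<kappa> \<ge> 0" "\<Psi> \<ge> 0"
    and D: "\<And>h. h \<in> R \<Longrightarrow> norm (eact h x0 - x0) \<le> D"
    and c: "c \<in> G"
  shows "(\<Sum>h\<in>R. (norm (W (emul c h) - W c))\<^sup>2) \<le>
    real (card R) * (8 * local_energy R x0 W a S c + 2 * (\<kappa> * D * \<Psi>)\<^sup>2)"
proof -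
  let ?E = "local_energy R x0 W a S c"
  have "(norm (W (emul c h) - W c))\<^sup>2 \<le> 8 * ?E + 2 * (\<kappa> * D * \<Psi>)\<^sup>2" if h: "h \<in> R" for h
  proof -
    have "norm (S c *v (eact (emul c h) x0 - eact c x0)) \<le> \<kappa> * norm (eact h x0 - x0) * \<Psi>"
      using \<kappa>(1)[of "eact (emul c h) x0 - eact c x0"] norm_eact_emul_diff[OF orth[OF c], of h x0] by simp
    also have "\<dots> \<le> \<kappa> * D * \<Psi>"
      using D[OF h] \<kappa>(2,3) by (intro mult_right_mono mult_left_mono) auto
    finally have "norm (W (emul c h) - W c) \<le> 2 * sqrt ?E + \<kappa> * D * \<Psi>"
      using norm_W_diff_le[OF finite_R eid_R h, of W c x0 a S] by linarith
    then have "(norm (W (emul c h) - W c))\<^sup>2 \<le> (2 * sqrt ?E + \<kappa> * D * \<Psi>)\<^sup>2"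
      by (intro power_mono) auto
    also have "\<dots> \<le> 2 * (2 * sqrt ?E)\<^sup>2 + 2 * (\<kappa> * D * \<Psi>)\<^sup>2"
      using sum_squares_bound[of "2 * sqrt ?E" "\<kappa> * D * \<Psi>"] by (simp only: power2_sum)
    finally show ?thesis by (simp add: power_mult_distrib)
  qed
  then have "(\<Sum>h\<in>R. (norm (W (emul c h) - W c))\<^sup>2) \<le> (\<Sum>h\<in>R. 8 * ?E + 2 * (\<kappa> * D * \<Psi>)\<^sup>2)"
    by (rule sum_mono)
  then show ?thesis by simp
qed

lemma skew_entries_bound:
  "\<exists>K\<ge>0. \<forall>N C W a S. periodic_cells G N C \<longrightarrow>
     cell_periodic G N W \<longrightarrow> cell_periodic G N a \<longrightarrow> cell_periodic G N S \<longrightarrow> (\<forall>g\<in>G. skew (S g)) \<longrightarrow>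
     (\<Sum>c\<in>C. (\<Sum>(b, b')\<in>B \<times> B. \<bar>inner (S c *v b) b'\<bar>)\<^sup>2) \<le> K * (\<Sum>c\<in>C. local_energy R x0 W a S c)"
proof -
  obtain Kd where Kd: "Kd \<ge> 0" "\<And>N C W a S. periodic_cells G N C \<Longrightarrow>
      cell_periodic G N W \<Longrightarrow> cell_periodic G N a \<Longrightarrow> cell_periodic G N S \<Longrightarrow>
      (\<forall>b\<in>B. (\<Sum>c\<in>C. (norm (translation_defect W S b c))\<^sup>2) \<le> Kd * (\<Sum>c\<in>C. local_energy R x0 W a S c))"
    using translation_defects_bound by blast
  define \<beta> where "\<beta> = (\<Sum>b\<in>B. (norm b)\<^sup>2)"
  have \<beta>: "\<And>b. b \<in> B \<Longrightarrow> (norm b)\<^sup>2 \<le> \<beta>" "\<beta> \<ge> 0"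
    unfolding \<beta>_def using finite_B by (auto intro: member_le_sum sum_nonneg)
  have "(\<Sum>c\<in>C. (\<Sum>(b, b')\<in>B \<times> B. \<bar>inner (S c *v b) b'\<bar>)\<^sup>2) \<le>
      (8 * \<beta> * real (card B) ^ 4 * Kd) * (\<Sum>c\<in>C. local_energy R x0 W a S c)"
    if cells: "periodic_cells G N C" and W: "cell_periodic G N W" and a: "cell_periodic G N a"
      and S: "cell_periodic G N S" and skew: "\<forall>g\<in>G. skew (S g)"
    for N C W a S
  proof -
    interpret periodic_cells G N C by (rule cells)
    let ?E = "\<Sum>c\<in>C. local_energy R x0 W a S c"
    have "(\<Sum>b\<in>B. \<Sum>c\<in>C. (norm (translation_defect W S b c))\<^sup>2) \<le> (\<Sum>b\<in>B. Kd * ?E)"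
      using Kd(2)[OF cells W a S] by (intro sum_mono) blast
    then have "(\<Sum>c\<in>C. (\<Sum>(b, b')\<in>B \<times> B. \<bar>inner (S c *v b) b'\<bar>)\<^sup>2) \<le>
        8 * \<beta> * real (card B) ^ 3 * (real (card B) * Kd * ?E)"
      using sum_skew_entries_squared_le[OF finite_B translation_B \<beta>(1) W S] skew \<beta>(2)
      by (force intro: order_trans mult_left_mono)
    then show ?thesis
      by (simp add: eval_nat_numeral mult_ac)
  qed
  then show ?thesis using \<beta>(2) Kd(1) by (intro exI[of _ "8 * \<beta> * real (card B) ^ 4 * Kd"]) auto
qed

lemma korn_global:
  "\<exists>K\<ge>0. \<forall>N C W a S. periodic_cells G N C \<longrightarrow>
     cell_periodic G N W \<longrightarrow> cell_periodic G N a \<longrightarrow> cell_periodic G N S \<longrightarrow> (\<forall>g\<in>G. skew (S g)) \<longrightarrow>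
     (\<Sum>c\<in>C. \<Sum>h\<in>R. (norm (W (emul c h) - W c))\<^sup>2) \<le> K * (\<Sum>c\<in>C. local_energy R x0 W a S c)"
proof -
  obtain Ks where Ks: "Ks \<ge> 0" "\<And>N C W a S. periodic_cells G N C \<Longrightarrow>
      cell_periodic G N W \<Longrightarrow> cell_periodic G N a \<Longrightarrow> cell_periodic G N S \<Longrightarrow> \<forall>g\<in>G. skew (S g) \<Longrightarrow>
      (\<Sum>c\<in>C. (\<Sum>(b, b')\<in>B \<times> B. \<bar>inner (S c *v b) b'\<bar>)\<^sup>2) \<le> Ks * (\<Sum>c\<in>C. local_energy R x0 W a S c)"
    using skew_entries_bound by blast
  obtain \<kappa> where \<kappa>: "\<kappa> \<ge> 0" "\<And>(M::real^'n^'n) y.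
      norm (M *v y) \<le> \<kappa> * norm y * (\<Sum>(b, b')\<in>B \<times> B. \<bar>inner (M *v b) b'\<bar>)"
    using matrix_vector_bound_by_entries[OF finite_B span_B] by blast
  define D where "D = (\<Sum>h\<in>R. norm (eact h x0 - x0))"
  have D: "\<And>h. h \<in> R \<Longrightarrow> norm (eact h x0 - x0) \<le> D" "D \<ge> 0"
    unfolding D_def using finite_R by (auto intro: member_le_sum sum_nonneg)
  have "(\<Sum>c\<in>C. \<Sum>h\<in>R. (norm (W (emul c h) - W c))\<^sup>2) \<le>
      (real (card R) * (8 + 2 * (\<kappa> * D)\<^sup>2 * Ks)) * (\<Sum>c\<in>C. local_energy R x0 W a S c)"
    if cells: "periodic_cells G N C" and W: "cell_periodic G N W" and a: "cell_periodic G N a"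
      and S: "cell_periodic G N S" and skew: "\<forall>g\<in>G. skew (S g)"
    for N C W a S
  proof -
    interpret periodic_cells G N C by (rule cells)
    let ?E = "\<Sum>c\<in>C. local_energy R x0 W a S c"
    let ?\<Psi> = "\<lambda>c. \<Sum>(b, b')\<in>B \<times> B. \<bar>inner (S c *v b) b'\<bar>"
    have "(\<Sum>c\<in>C. \<Sum>h\<in>R. (norm (W (emul c h) - W c))\<^sup>2) \<le>
        (\<Sum>c\<in>C. real (card R) * (8 * local_energy R x0 W a S c + 2 * (\<kappa> * D * ?\<Psi> c)\<^sup>2))"
      using C_subset \<kappa> D by (intro sum_mono sum_W_diff_squared_le) (auto intro: sum_nonneg)
    also have "\<dots> = real (card R) * (8 * ?E + 2 * (\<kappa> * D)\<^sup>2 * (\<Sum>c\<in>C. (?\<Psi> c)\<^sup>2))"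
      by (simp add: sum.distrib power_mult_distrib mult.assoc flip: sum_distrib_left)
    also have "\<dots> \<le> real (card R) * (8 * ?E + 2 * (\<kappa> * D)\<^sup>2 * (Ks * ?E))"
      using Ks(2)[OF cells W a S skew] by (intro mult_left_mono add_left_mono) auto
    also have "\<dots> = (real (card R) * (8 + 2 * (\<kappa> * D)\<^sup>2 * Ks)) * ?E"
      by (simp add: algebra_simps)
    finally show ?thesis .
  qed
  then show ?thesis using Ks(1) by (intro exI[of _ "real (card R) * (8 + 2 * (\<kappa> * D)\<^sup>2 * Ks)"]) auto
qed

lemma korn_rigid_fit:
  "\<exists>K\<ge>0. \<forall>N C u a S. periodic_cells G N C \<longrightarrow> periodic G N u \<longrightarrow> (\<forall>c\<in>C. skew (S c)) \<longrightarrow>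
     (\<Sum>c\<in>C. \<Sum>h\<in>R. (norm (u (emul c h) - transpose (rot h) *v u c))\<^sup>2) \<le>
       K * (\<Sum>c\<in>C. \<Sum>h\<in>R. (norm (rot h *v u (emul c h) - a c - S c *v (eact h x0 - x0)))\<^sup>2)"
proof -
  obtain K where K: "K \<ge> 0" "\<And>N C W a S. periodic_cells G N C \<Longrightarrow>
      cell_periodic G N W \<Longrightarrow> cell_periodic G N a \<Longrightarrow> cell_periodic G N S \<Longrightarrow> \<forall>g\<in>G. skew (S g) \<Longrightarrow>
      (\<Sum>c\<in>C. \<Sum>h\<in>R. (norm (W (emul c h) - W c))\<^sup>2) \<le> K * (\<Sum>c\<in>C. local_energy R x0 W a S c)"
    using korn_global by blast
  have "(\<Sum>c\<in>C. \<Sum>h\<in>R. (norm (u (emul c h) - transpose (rot h) *v u c))\<^sup>2) \<le>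
       K * (\<Sum>c\<in>C. \<Sum>h\<in>R. (norm (rot h *v u (emul c h) - a c - S c *v (eact h x0 - x0)))\<^sup>2)"
    if cells: "periodic_cells G N C" and u: "periodic G N u" and skew: "\<forall>c\<in>C. skew (S c)" for N C u a S
  proof -
    interpret periodic_cells G N C by (rule cells)
    let ?W = "\<lambda>g. fst g *v u g" and ?\<alpha> = "\<lambda>g. fst (rep g) *v a (rep g)"
      and ?\<Sigma> = "\<lambda>g. fst (rep g) ** S (rep g) ** transpose (fst (rep g))"
    have "cell_periodic G N ?W"
      using u unfolding cell_periodic_def periodic_def by (simp add: fst_TN)
    moreover have "cell_periodic G N ?\<alpha>" "cell_periodic G N ?\<Sigma>"
      by (rule cell_periodic_comp_rep)+
    moreover have "\<forall>g\<in>G. skew (?\<Sigma> g)"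
      using rep skew skew_conj by blast
    ultimately have "(\<Sum>c\<in>C. \<Sum>h\<in>R. (norm (?W (emul c h) - ?W c))\<^sup>2) \<le>
        K * (\<Sum>c\<in>C. local_energy R x0 ?W ?\<alpha> ?\<Sigma> c)"
      by (rule K(2)[OF cells])
    then show ?thesis
      unfolding sum_gradient_in_frame[OF R_subset] sum_local_energy_in_frame[OF R_subset] .
  qed
  then show ?thesis using K(1) by blast
qed

lemma orth_R: "h \<in> R \<Longrightarrow> orth h"
  using R_subset orth by blast

lemma gradR_le_normR:
  "\<exists>K\<ge>0. \<forall>N\<in>Mset G. \<forall>C u. coset_reps G N C \<and> periodic G N u \<longrightarrow> gradR R C u \<le> K * normR x0 R C u"
proof -
  obtain K where K: "K \<ge> 0" "\<And>N C u a S. periodic_cells G N C \<Longrightarrow> periodic G N u \<Longrightarrow> \<forall>c\<in>C. skew (S c) \<Longrightarrow>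
      (\<Sum>c\<in>C. \<Sum>h\<in>R. (norm (u (emul c h) - transpose (rot h) *v u c))\<^sup>2) \<le>
        K * (\<Sum>c\<in>C. \<Sum>h\<in>R. (norm (rot h *v u (emul c h) - a c - S c *v (eact h x0 - x0)))\<^sup>2)"
    using korn_rigid_fit by blast
  have "gradR R C u \<le> sqrt K * normR x0 R C u"
    if N: "N \<in> Mset G" and C: "coset_reps G N C" and u: "periodic G N u" for N C u
  proof (cases "finite C")
    case False
    then show ?thesis by (simp add: gradR_def normR_def)
  next
    case True
    with N C have cells: "periodic_cells G N C"
      by unfold_locales (simp_all add: Mset_def subgroup)
    let ?d = "\<lambda>c. distR R (\<lambda>h. u (emul c h)) (Uiso x0 R)"
    have approx: "(\<Sum>c\<in>C. \<Sum>h\<in>R. (norm (u (emul c h) - transpose (rot h) *v u c))\<^sup>2) \<le>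
        K * (\<Sum>c\<in>C. (?d c)\<^sup>2) + K * real (card C) * e" if e: "e > 0" for e
    proof -
      obtain a S where fits: "\<forall>c\<in>C. skew (S c) \<and>
          (\<Sum>h\<in>R. (norm (rot h *v u (emul c h) - a c - S c *v (eact h x0 - x0)))\<^sup>2) < (?d c)\<^sup>2 + e"
        using exists_near_rigid_fits[OF orth_R e, where C=C and v="\<lambda>c h. u (emul c h)"] by blast
      then have skew: "\<forall>c\<in>C. skew (S c)" by blast
      have "(\<Sum>c\<in>C. \<Sum>h\<in>R. (norm (rot h *v u (emul c h) - a c - S c *v (eact h x0 - x0)))\<^sup>2)
          \<le> (\<Sum>c\<in>C. (?d c)\<^sup>2 + e)"
        using fits by (intro sum_mono) (simp add: less_imp_le)
      then have "K * (\<Sum>c\<in>C. \<Sum>h\<in>R. (norm (rot h *v u (emul c h) - a c - S c *v (eact h x0 - x0)))\<^sup>2)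
          \<le> K * (\<Sum>c\<in>C. (?d c)\<^sup>2 + e)"
        using K(1) by (rule mult_left_mono)
      also have "\<dots> = K * (\<Sum>c\<in>C. (?d c)\<^sup>2) + K * real (card C) * e"
        by (simp add: sum.distrib distrib_left)
      finally show ?thesis using K(2)[OF cells u skew, of a] by linarith
    qed
    have "(\<Sum>c\<in>C. \<Sum>h\<in>R. (norm (u (emul c h) - transpose (rot h) *v u c))\<^sup>2) \<le> K * (\<Sum>c\<in>C. (?d c)\<^sup>2)"
      using le_of_forall_pos_le_add_mult[OF _ approx] K(1) by simp
    then show ?thesis unfolding gradR_def normR_def using K(1) by (intro sqrt_scaled_le) auto
  qed
  then show ?thesis using K(1) by (intro exI[of _ "sqrt K"]) auto
qed

end

lemma space_group_translation_basis:
  fixes G :: "'n::finite euc set"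
  assumes "space_group G"
  obtains B where "finite B" "span B = UNIV" "\<And>b. b \<in> B \<Longrightarrow> translation b \<in> G"
proof -
  obtain B where B: "B \<subseteq> {b. (mat 1, b) \<in> G}" "independent B" "card B = CARD('n)"
    using assms unfolding space_group_def by blast
  have "finite B" using B(2) indep_card_eq_dim_span by blast
  moreover have "span B = UNIV"
  proof -
    have "UNIV \<subseteq> span B"
      using card_ge_dim_independent[of B UNIV] B by (simp add: dim_UNIV)
    then show ?thesis by (rule top.extremum_uniqueI)
  qed
  moreover have "translation b \<in> G" if "b \<in> B" for b
    using B(1) that by (auto simp: translation_def)
  ultimately show thesis by (rule that)
qed

text \<open>The translations \<open>x0 + b\<close> of the orbit point lie in the affine hull of the orbit of \<open>R''\<close>,
  so the vectors \<open>h x0 - x0\<close>, \<open>h \<in> R''\<close>, span the space.\<close>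

lemma property2_stencil:
  assumes G: "euc_subgroup G" and R: "property2 G x0 R"
    and B: "span B = UNIV" "\<And>b. b \<in> B \<Longrightarrow> translation b \<in> G"
  obtains R' R'' where "korn_stencil G R R' R'' x0"
proof -
  obtain R' R'' where R': "R' \<subseteq> G" "eid \<in> R'" "generated R' = G" and R'': "property1 G x0 R''"
      and prod: "{emul g h | g h. g \<in> R' \<and> h \<in> R''} \<subseteq> R"
    using R unfolding property2_def by blast
  have eid: "eid \<in> R''" and aff: "affine hull ((\<lambda>g. eact g x0) ` R'') = affine hull ((\<lambda>g. eact g x0) ` G)"
    using R'' by (auto simp: property1_def)
  let ?Z = "(\<lambda>h. eact h x0 - x0) ` R''"
  have x0: "x0 \<in> (\<lambda>g. eact g x0) ` R''" using eid by (force simp: eact_def eid_def)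
  have "B \<subseteq> span ?Z"
  proof
    fix b assume b: "b \<in> B"
    have "x0 + b \<in> (\<lambda>g. eact g x0) ` G"
      using B(2)[OF b] by (force simp: eact_def translation_def add.commute)
    then have "x0 + b \<in> affine hull ((\<lambda>g. eact g x0) ` R'')" unfolding aff by (rule hull_inc)
    then obtain v where v: "v \<in> span ((\<lambda>x. - x0 + x) ` ((\<lambda>g. eact g x0) ` R'' - {x0}))" "x0 + b = x0 + v"
      unfolding affine_hull_span2[OF x0] by blast
    have "(\<lambda>x. - x0 + x) ` ((\<lambda>g. eact g x0) ` R'' - {x0}) \<subseteq> ?Z" by auto
    then have "v \<in> span ?Z" using v(1) span_mono by blast
    then show "b \<in> span ?Z" using v(2) by simp
  qed
  then have "span ?Z = UNIV" using B(1) span_minimal[OF _ subspace_span] by blast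
  moreover have "emul g h \<in> R" if "g \<in> R'" "h \<in> R''" for g h
    using prod that by blast
  moreover have "finite R" "finite R''"
    using R R'' by (simp_all add: property1_def property2_def)
  ultimately have "korn_stencil G R R' R'' x0"
    using G R' eid by unfold_locales simp_all
  then show thesis by (rule that)
qed

lemma finite_rotations_of_coset_reps:
  assumes G: "euc_subgroup G" and C: "coset_reps G N C" "finite C"
  shows "finite (fst ` G)"
proof -
  have "fst ` G \<subseteq> fst ` C"
  proof
    fix A assume "A \<in> fst ` G"
    then obtain g where g: "g \<in> G" "A = fst g" by blast
    then obtain c where c: "c \<in> C" "emul (einv c) g \<in> TN G N"
      using C unfolding coset_reps_def by blast
    have "orth c" using c(1) C G by (auto simp: coset_reps_def euc_subgroup_def orth_def)
    then have "fst g = fst c ** fst (emul (einv c) g)" by (metis fst_emul einv_cancel(4))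
    then have "A = fst c" using g(2) fst_TN[OF c(2)] by simp
    then show "A \<in> fst ` C" using c(1) by blast
  qed
  then show ?thesis using C(2) finite_subset by blast
qed

lemma korn_inequality:
  assumes G: "space_group G" and R: "property2 G x0 R"
  shows "\<exists>K\<ge>0. \<forall>N\<in>Mset G. \<forall>C u. coset_reps G N C \<and> periodic G N u \<longrightarrow>
    gradR R C u \<le> K * normR x0 R C u"
proof (cases "finite (fst ` G)")
  case True
  have sub: "euc_subgroup G" using G by (simp add: space_group_def)
  obtain B where B: "finite B" "span B = UNIV" "\<And>b. b \<in> B \<Longrightarrow> translation b \<in> G"
    using space_group_translation_basis[OF G] by blast
  obtain R' R'' where "korn_stencil G R R' R'' x0"
    using property2_stencil[OF sub R B(2,3)] by blast
  moreover have "R \<subseteq> G" using R by (simp add: property2_def)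
  ultimately interpret korn_setting G R R' R'' x0 B
    using B True by (simp add: korn_setting_def korn_setting_axioms_def)
  show ?thesis by (rule gradR_le_normR)
next
  case False
  txt \<open>Then no set of coset representatives is finite, and \<open>gradR\<close> vanishes because
    \<open>card C = 0\<close>.\<close>
  have "gradR R C u = 0" if "coset_reps G N C" for N C u
  proof -
    have "infinite C"
      using finite_rotations_of_coset_reps[OF _ that] G False by (auto simp: space_group_def)
    then show ?thesis by (simp add: gradR_def)
  qed
  then show ?thesis by (intro exI[of _ 0]) auto
qed

lemma property2D:
  assumes "property2 G x0 R"
  shows "R \<subseteq> G" "finite R" "eid \<in> R"
proof -
  obtain R' R'' where "eid \<in> R'" "property1 G x0 R''" "{emul g h | g h. g \<in> R' \<and> h \<in> R''} \<subseteq> R"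
    using assms unfolding property2_def by blast
  then have "emul eid eid \<in> R" unfolding property1_def by blast
  then show "eid \<in> R" by simp
  show "R \<subseteq> G" "finite R" using assms by (simp_all add: property2_def)
qed

lemma norms_nonneg: "0 \<le> normR x0 R C u" "0 \<le> normR00 x0 R C u" "0 \<le> gradR R C u"
  unfolding normR_def normR00_def gradR_def
  by (intro real_sqrt_ge_zero mult_nonneg_nonneg sum_nonneg; simp)+

lemma mutual_bounds_of_cycle:
  fixes a b g Kc Kd K :: real
  assumes "0 \<le> a" "0 \<le> b" "0 \<le> g" "a \<le> b" "b \<le> g" "g \<le> Kc * b" "g \<le> Kd * a"
    and "1 \<le> K" "Kc \<le> K" "Kd \<le> K"
  shows "a \<le> K * b \<and> a \<le> K * g \<and> b \<le> K * a \<and> b \<le> K * g \<and> g \<le> K * a \<and> g \<le> K * b"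
proof -
  have "x \<le> K * x" if "0 \<le> x" for x using assms(8) that by (simp add: mult_le_cancel_right1)
  then have "a \<le> K * a" "b \<le> K * b" "g \<le> K * g" using assms(1-3) by auto
  moreover have "Kc * b \<le> K * b" "Kd * a \<le> K * a" using assms by (simp_all add: mult_right_mono)
  ultimately show ?thesis using assms(1-7) by linarith
qed

theorem corollary4p7:
  fixes G :: "'n::finite euc set" and R :: "'n euc set" and x0 :: "real^'n"
  assumes "space_group G"
    and "inj_on (\<lambda>g. eact g x0) G"
    and "property2 G x0 R"
  shows "\<exists>K>0. \<forall>N\<in>Mset G. \<forall>C u. coset_reps G N C \<and> periodic G N u \<longrightarrow>
           normR x0 R C u \<le> K * normR00 x0 R C u \<and>
           normR x0 R C u \<le> K * gradR R C u \<and>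
           normR00 x0 R C u \<le> K * normR x0 R C u \<and>
           normR00 x0 R C u \<le> K * gradR R C u \<and>
           gradR R C u \<le> K * normR x0 R C u \<and>
           gradR R C u \<le> K * normR00 x0 R C u"
proof -
  note R = property2D[OF assms(3)]
  have orth_R: "\<And>h. h \<in> R \<Longrightarrow> orth h"
    using R(1) assms(1) by (auto simp: space_group_def euc_subgroup_def orth_def)
  obtain Kd where Kd: "\<forall>N\<in>Mset G. \<forall>C u. coset_reps G N C \<and> periodic G N u \<longrightarrow>
      gradR R C u \<le> Kd * normR x0 R C u"
    using korn_inequality[OF assms(1,3)] by blast
  define Kc where "Kc = sqrt (2 * (1 + real (card R)))"
  define K where "K = max 1 (max Kc Kd)"
  have K: "1 \<le> K" "Kc \<le> K" "Kd \<le> K" by (auto simp: K_def)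
  have "normR x0 R C u \<le> K * normR00 x0 R C u \<and> normR x0 R C u \<le> K * gradR R C u \<and>
      normR00 x0 R C u \<le> K * normR x0 R C u \<and> normR00 x0 R C u \<le> K * gradR R C u \<and>
      gradR R C u \<le> K * normR x0 R C u \<and> gradR R C u \<le> K * normR00 x0 R C u"
    if "N \<in> Mset G" "coset_reps G N C \<and> periodic G N u" for N C u
    by (rule mutual_bounds_of_cycle[OF norms_nonneg normR_le_normR00 normR00_le_gradR[OF orth_R]
        gradR_le_normR00[OF orth_R R(3,2), folded Kc_def] Kd[rule_format, OF that] K])
  moreover have "K > 0" using K(1) by simp
  ultimately show ?thesis by blast
qed

end
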